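(* Let $\Sigma^n\subset\mathbb{C}^n$ be a Lagrangian self-shrinker. Then for every smooth function $f$ on $\Sigma$, $$L(J\nabla f)=J\nabla(\mathcal{L}f+f).$$ In particular, the space of Hamiltonian normal vector fields $\{J\nabla f\}$ is invariant under $L$.
   Context: A self-shrinker is a submanifold $\Sigma^n\subset\mathbb{R}^{n+p}$ with $H=-\frac12x^\perp$, where $A(X,Y)=(\bar\nabla_XY)^\perp$ and $H=\mathrm{tr}A$. A Lagrangian self-shrinker is one in $\mathbb{C}^n\cong\mathbb{R}^{2n}$ that is Lagrangian; $J$ is the standard complex structure, so $J\nabla f$ is a normal vector field. $\mathcal{L}v=\Delta v-\frac12\langle x,\nabla v\rangle$ on functions. For a normal vector field $V$, with $\{e_i\}$ a local orthonormal tangent frame, $LV=\Delta^\perp V-\frac12\nabla^\perp_{x^T}V+\sum_{i,j}\langle A(e_i,e_j),V\rangle A(e_i,e_j)+\frac12V$, where $\nabla^\perp$ is the normal connection, $\Delta^\perp$ the normal Laplacian and $x^T$ the tangential part of $x$. *)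

theory Defs
  imports "HOL-Analysis.Analysis"
begin

text \<open>Local coordinate description of an immersed submanifold
  F : U \<subseteq> R^n \<rightarrow> C^n (= R^2n with the real inner product Re(z * cnj w) in each
  component). All geometric quantities are written in the coordinates u of the chart.\<close>

definition pd :: "'n::finite \<Rightarrow> (real^'n \<Rightarrow> 'b::real_normed_vector) \<Rightarrow> real^'n \<Rightarrow> 'b" where
  "pd i G u = frechet_derivative G (at u) (axis i 1)"

fun iter_pd :: "'n::finite list \<Rightarrow> (real^'n \<Rightarrow> 'b::real_normed_vector) \<Rightarrow> real^'n \<Rightarrow> 'b" where
  "iter_pd [] G = G"
| "iter_pd (i # ks) G = pd i (iter_pd ks G)"

definition smooth_on :: "(real^'n::finite) set \<Rightarrow> (real^'n \<Rightarrow> 'b::real_normed_vector) \<Rightarrow> bool" where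
  "smooth_on U G \<longleftrightarrow> (\<forall>ks. \<forall>u\<in>U. iter_pd ks G differentiable (at u))"

definition Jc :: "complex^'n \<Rightarrow> complex^'n" where
  "Jc v = (\<chi> k. \<i> * v $ k)"

definition gmat :: "(real^'n::finite \<Rightarrow> complex^'n) \<Rightarrow> real^'n \<Rightarrow> real^'n^'n" where
  "gmat F u = (\<chi> i j. inner (pd i F u) (pd j F u))"

definition ginv :: "(real^'n::finite \<Rightarrow> complex^'n) \<Rightarrow> real^'n \<Rightarrow> 'n \<Rightarrow> 'n \<Rightarrow> real" where
  "ginv F u i j = matrix_inv (gmat F u) $ i $ j"

definition tproj :: "(real^'n::finite \<Rightarrow> complex^'n) \<Rightarrow> real^'n \<Rightarrow> complex^'n \<Rightarrow> complex^'n" where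
  "tproj F u v = (\<Sum>i\<in>UNIV. \<Sum>j\<in>UNIV. (ginv F u i j * inner v (pd j F u)) *\<^sub>R pd i F u)"

definition nproj :: "(real^'n::finite \<Rightarrow> complex^'n) \<Rightarrow> real^'n \<Rightarrow> complex^'n \<Rightarrow> complex^'n" where
  "nproj F u v = v - tproj F u v"

definition sff :: "(real^'n::finite \<Rightarrow> complex^'n) \<Rightarrow> real^'n \<Rightarrow> 'n \<Rightarrow> 'n \<Rightarrow> complex^'n" where
  "sff F u i j = nproj F u (pd i (pd j F) u)"

definition meancurv :: "(real^'n::finite \<Rightarrow> complex^'n) \<Rightarrow> real^'n \<Rightarrow> complex^'n" where
  "meancurv F u = (\<Sum>i\<in>UNIV. \<Sum>j\<in>UNIV. ginv F u i j *\<^sub>R sff F u i j)"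

definition christoffel :: "(real^'n::finite \<Rightarrow> complex^'n) \<Rightarrow> real^'n \<Rightarrow> 'n \<Rightarrow> 'n \<Rightarrow> 'n \<Rightarrow> real" where
  "christoffel F u k i j = (\<Sum>l\<in>UNIV. ginv F u k l * inner (pd i (pd j F) u) (pd l F u))"

definition grad :: "(real^'n::finite \<Rightarrow> complex^'n) \<Rightarrow> (real^'n \<Rightarrow> real) \<Rightarrow> real^'n \<Rightarrow> complex^'n" where
  "grad F f u = (\<Sum>i\<in>UNIV. \<Sum>j\<in>UNIV. (ginv F u i j * pd j f u) *\<^sub>R pd i F u)"

definition laplace :: "(real^'n::finite \<Rightarrow> complex^'n) \<Rightarrow> (real^'n \<Rightarrow> real) \<Rightarrow> real^'n \<Rightarrow> real" where
  "laplace F f u = (\<Sum>i\<in>UNIV. \<Sum>j\<in>UNIV. ginv F u i j *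
       (pd i (pd j f) u - (\<Sum>k\<in>UNIV. christoffel F u k i j * pd k f u)))"

definition driftL :: "(real^'n::finite \<Rightarrow> complex^'n) \<Rightarrow> (real^'n \<Rightarrow> real) \<Rightarrow> real^'n \<Rightarrow> real" where
  "driftL F f u = laplace F f u - (1/2) * inner (F u) (grad F f u)"

text \<open>Normal connection \<nabla>^\<perp>_{\<partial>_i} V = (D_{\<partial>_i} V)^\<perp>, normal Laplacian,
  and the coordinates of x^T = sum_k X^k \<partial>_k F.\<close>
definition nabn :: "(real^'n::finite \<Rightarrow> complex^'n) \<Rightarrow> 'n \<Rightarrow> (real^'n \<Rightarrow> complex^'n) \<Rightarrow> real^'n \<Rightarrow> complex^'n" where
  "nabn F i V u = nproj F u (pd i V u)"

definition nlaplace :: "(real^'n::finite \<Rightarrow> complex^'n) \<Rightarrow> (real^'n \<Rightarrow> complex^'n) \<Rightarrow> real^'n \<Rightarrow> complex^'n" where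
  "nlaplace F V u = (\<Sum>i\<in>UNIV. \<Sum>j\<in>UNIV. ginv F u i j *\<^sub>R
       (nabn F i (nabn F j V) u - (\<Sum>k\<in>UNIV. christoffel F u k i j *\<^sub>R nabn F k V u)))"

definition xT_coord :: "(real^'n::finite \<Rightarrow> complex^'n) \<Rightarrow> real^'n \<Rightarrow> 'n \<Rightarrow> real" where
  "xT_coord F u k = (\<Sum>l\<in>UNIV. ginv F u k l * inner (F u) (pd l F u))"

text \<open>The operator L on normal vector fields. The term sum over an orthonormal frame
  of <A(e_i,e_j),V> A(e_i,e_j) is written as g^ik g^jl <A_ij,V> A_kl.\<close>
definition Lop :: "(real^'n::finite \<Rightarrow> complex^'n) \<Rightarrow> (real^'n \<Rightarrow> complex^'n) \<Rightarrow> real^'n \<Rightarrow> complex^'n" where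
  "Lop F V u = nlaplace F V u
     - (1/2) *\<^sub>R (\<Sum>k\<in>UNIV. xT_coord F u k *\<^sub>R nabn F k V u)
     + (\<Sum>i\<in>UNIV. \<Sum>j\<in>UNIV. \<Sum>k\<in>UNIV. \<Sum>l\<in>UNIV.
          (ginv F u i k * ginv F u j l * inner (sff F u i j) (V u)) *\<^sub>R sff F u k l)
     + (1/2) *\<^sub>R V u"

definition immersion_on :: "(real^'n::finite) set \<Rightarrow> (real^'n \<Rightarrow> complex^'n) \<Rightarrow> bool" where
  "immersion_on U F \<longleftrightarrow> (\<forall>u\<in>U. inj (frechet_derivative F (at u)))"

definition lagrangian_on :: "(real^'n::finite) set \<Rightarrow> (real^'n \<Rightarrow> complex^'n) \<Rightarrow> bool" where
  "lagrangian_on U F \<longleftrightarrow> (\<forall>u\<in>U. \<forall>i j. inner (Jc (pd i F u)) (pd j F u) = 0)"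

definition self_shrinker_on :: "(real^'n::finite) set \<Rightarrow> (real^'n \<Rightarrow> complex^'n) \<Rightarrow> bool" where
  "self_shrinker_on U F \<longleftrightarrow> (\<forall>u\<in>U. meancurv F u = - (1/2) *\<^sub>R nproj F u (F u))"

end

theory Submission
  imports Defs
begin

(* Since F is Lagrangian,
   the tangent frame d_i F together with the normal frame J d_i F is a real basis of C^n = R^2n,
   so a vector vanishes once its inner products with all d_p F and all J d_p F vanish, and the
   normal projection is the expansion in the J-frame.  Both sides of  L(J grad f) = J grad(Lf + f)
   are normal, so it suffices to compare their J d_m F components.  That of J grad(Lf + f) is
   d_m(Lf + f), where Lf = g^ij Hess f_ij - <F, grad f>/2; we differentiate it with the product
   rule, the derivative of the inverse metric, Schwarz's theorem and the self-shrinker equation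
   <F, J d_l F> = -2 g^ab <d_a d_b F, J d_l F>.  That of L(J grad f) comes from the definition of
   the normal Laplacian, using that the normal derivative of J grad f has J d_k F-components given
   by the Hessian of f.  An index computation, using the symmetry of the metric, the Christoffel
   symbols, the Hessian and the Lagrangian cubic form <d_i d_j F, J d_l F>, identifies the two. *)

lemma pd_has_derivative: "(G has_derivative G') (at v) \<Longrightarrow> pd i G v = G' (axis i 1)"
  by (simp add: pd_def frechet_derivative_at[symmetric])

lemma pd_cong_open:
  assumes "open S" "v \<in> S" "\<And>w. w \<in> S \<Longrightarrow> a w = b w"
  shows "pd i a v = pd i b v"
proof -
  have "\<And>D. (a has_derivative D) (at v) \<longleftrightarrow> (b has_derivative D) (at v)"
    using assms has_derivative_transform_within_open[of a _ v UNIV S b]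
      has_derivative_transform_within_open[of b _ v UNIV S a] by metis
  then show ?thesis by (simp add: pd_def frechet_derivative_def)
qed

lemma differentiable_cong_open:
  assumes "open S" "v \<in> S" "\<And>w. w \<in> S \<Longrightarrow> a w = b w" "a differentiable (at v)"
  shows "b differentiable (at v)"
  using assms has_derivative_transform_within_open[of a _ v UNIV S b] unfolding differentiable_def
  by metis

lemma pd_inner:
  assumes "a differentiable (at v)" "b differentiable (at v)"
  shows "pd i (\<lambda>w. inner (a w) (b w)) v = inner (pd i a v) (b v) + inner (a v) (pd i b v)"
proof -
  have "((\<lambda>w. inner (a w) (b w)) has_derivative
     (\<lambda>h. inner (a v) (frechet_derivative b (at v) h) + inner (frechet_derivative a (at v) h) (b v))) (at v)"
    using assms by (intro has_derivative_inner frechet_derivative_works[THEN iffD1])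
  from pd_has_derivative[OF this] show ?thesis by (simp add: pd_def)
qed

lemma pd_scaleR:
  assumes "a differentiable (at v)" "b differentiable (at v)"
  shows "pd i (\<lambda>w. a w *\<^sub>R b w) v = pd i a v *\<^sub>R b v + a v *\<^sub>R pd i b v"
proof -
  have "((\<lambda>w. a w *\<^sub>R b w) has_derivative
     (\<lambda>h. a v *\<^sub>R (frechet_derivative b (at v) h) + (frechet_derivative a (at v) h) *\<^sub>R (b v))) (at v)"
    using assms by (intro has_derivative_scaleR frechet_derivative_works[THEN iffD1])
  from pd_has_derivative[OF this] show ?thesis by (simp add: pd_def)
qed

lemma pd_mult:
  fixes a b :: "real^'n::finite \<Rightarrow> real"
  assumes "a differentiable (at v)" "b differentiable (at v)"
  shows "pd i (\<lambda>w. a w * b w) v = pd i a v * b v + a v * pd i b v"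
  using pd_scaleR[OF assms] by simp

lemma pd_add:
  assumes "a differentiable (at v)" "b differentiable (at v)"
  shows "pd i (\<lambda>w. a w + b w) v = pd i a v + pd i b v"
proof -
  have "((\<lambda>w. a w + b w) has_derivative
     (\<lambda>h. frechet_derivative a (at v) h + frechet_derivative b (at v) h)) (at v)"
    using assms by (intro has_derivative_add frechet_derivative_works[THEN iffD1])
  from pd_has_derivative[OF this] show ?thesis by (simp add: pd_def)
qed

lemma pd_diff:
  assumes "a differentiable (at v)" "b differentiable (at v)"
  shows "pd i (\<lambda>w. a w - b w) v = pd i a v - pd i b v"
proof -
  have "((\<lambda>w. a w - b w) has_derivative
     (\<lambda>h. frechet_derivative a (at v) h - frechet_derivative b (at v) h)) (at v)"
    using assms by (intro has_derivative_diff frechet_derivative_works[THEN iffD1])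
  from pd_has_derivative[OF this] show ?thesis by (simp add: pd_def)
qed

lemma pd_sum:
  assumes "finite I" "\<And>k. k \<in> I \<Longrightarrow> a k differentiable (at v)"
  shows "pd i (\<lambda>w. \<Sum>k\<in>I. a k w) v = (\<Sum>k\<in>I. pd i (a k) v)"
proof -
  have "((\<lambda>w. \<Sum>k\<in>I. a k w) has_derivative
     (\<lambda>h. \<Sum>k\<in>I. frechet_derivative (a k) (at v) h)) (at v)"
    using assms by (intro has_derivative_sum frechet_derivative_works[THEN iffD1]) auto
  from pd_has_derivative[OF this] show ?thesis by (simp add: pd_def)
qed

lemma pd_const: "pd i (\<lambda>w. c) v = 0"
  by (simp add: pd_def)

lemma pd_linear:
  assumes "bounded_linear T" "a differentiable (at v)"
  shows "pd i (\<lambda>w. T (a w)) v = T (pd i a v)"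
proof -
  have "((\<lambda>w. T (a w)) has_derivative (\<lambda>h. T (frechet_derivative a (at v) h))) (at v)"
    using bounded_linear.has_derivative[OF assms(1) frechet_derivative_works[THEN iffD1, OF assms(2)]] .
  from pd_has_derivative[OF this] show ?thesis by (simp add: pd_def)
qed

lemma pd_inner_const:
  assumes "G differentiable (at v)"
  shows "pd i (\<lambda>w. inner (G w) c) v = inner (pd i G v) c"
  using pd_inner[OF assms, of "\<lambda>_. c"] by (simp add: pd_const)

lemma smooth_on_iter_pd:
  "smooth_on U G \<Longrightarrow> v \<in> U \<Longrightarrow> iter_pd ks G differentiable (at v)"
  unfolding smooth_on_def by blast

lemma smooth_on_differentiable: "smooth_on U G \<Longrightarrow> v \<in> U \<Longrightarrow> G differentiable (at v)"
  using smooth_on_iter_pd[of U G v "[]"] by simp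

lemma smooth_on_pd_differentiable: "smooth_on U G \<Longrightarrow> v \<in> U \<Longrightarrow> pd i G differentiable (at v)"
  using smooth_on_iter_pd[of U G v "[i]"] by simp

lemma smooth_on_pd2_differentiable:
  "smooth_on U G \<Longrightarrow> v \<in> U \<Longrightarrow> pd i (pd j G) differentiable (at v)"
  using smooth_on_iter_pd[of U G v "[i, j]"] by simp

section \<open>Symmetry of second partial derivatives\<close>

lemma second_difference_mean_value:
  fixes \<phi> :: "real^'n::finite \<Rightarrow> real"
  assumes t: "t > 0"
    and inU: "\<And>s c. 0 \<le> s \<Longrightarrow> s \<le> t \<Longrightarrow> 0 \<le> c \<Longrightarrow> c \<le> t \<Longrightarrow> u + c *\<^sub>R b + s *\<^sub>R a \<in> U"
    and d1: "\<And>v. v \<in> U \<Longrightarrow> \<phi> differentiable (at v)"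
  obtains z where "0 < z" "z < t"
    "\<phi> (u + t *\<^sub>R b + t *\<^sub>R a) - \<phi> (u + t *\<^sub>R a) - \<phi> (u + t *\<^sub>R b) + \<phi> u
       = t * (frechet_derivative \<phi> (at (u + t *\<^sub>R b + z *\<^sub>R a)) a
              - frechet_derivative \<phi> (at (u + z *\<^sub>R a)) a)"
proof -
  define \<psi> where "\<psi> w = frechet_derivative \<phi> (at w) a" for w
  have dirder: "((\<lambda>s. \<phi> (p + s *\<^sub>R a)) has_real_derivative \<psi> (p + z *\<^sub>R a)) (at z)"
    if "p + z *\<^sub>R a \<in> U" for p z
  proof -
    let ?D = "frechet_derivative \<phi> (at (p + z *\<^sub>R a))"
    have "(\<phi> has_derivative ?D) (at (p + z *\<^sub>R a))"
      using d1 that frechet_derivative_works by blast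
    moreover have "((\<lambda>s. p + s *\<^sub>R a) has_derivative (\<lambda>h. h *\<^sub>R a)) (at z)"
      by (auto intro!: derivative_eq_intros)
    ultimately have "((\<lambda>s. \<phi> (p + s *\<^sub>R a)) has_derivative (\<lambda>h. ?D (h *\<^sub>R a))) (at z)"
      using has_derivative_compose[of "\<lambda>s. p + s *\<^sub>R a" _ z UNIV \<phi>] by auto
    moreover have "linear ?D"
      using d1 that by (simp add: linear_frechet_derivative)
    ultimately show ?thesis
      unfolding has_field_derivative_def \<psi>_def by (simp add: linear_cmul mult.commute[of _ "?D _"])
  qed
  define g where "g s = \<phi> (u + t *\<^sub>R b + s *\<^sub>R a) - \<phi> (u + s *\<^sub>R a)" for s
  have gder: "(g has_real_derivative (\<psi> (u + t *\<^sub>R b + s *\<^sub>R a) - \<psi> (u + s *\<^sub>R a))) (at s)"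
    if "0 \<le> s" "s \<le> t" for s
  proof -
    have "u + t *\<^sub>R b + s *\<^sub>R a \<in> U" using inU[OF that] t by simp
    moreover have "u + s *\<^sub>R a \<in> U" using inU[OF that, of 0] t by simp
    ultimately show ?thesis unfolding g_def by (intro DERIV_diff dirder)
  qed
  have "continuous_on {0..t} g"
    using gder by (meson DERIV_continuous atLeastAtMost_iff continuous_at_imp_continuous_on)
  moreover have "\<And>x. 0 < x \<Longrightarrow> x < t \<Longrightarrow> g differentiable (at x)"
    using gder real_differentiable_def by (meson less_imp_le)
  ultimately obtain l z where z: "0 < z" "z < t" "(g has_real_derivative l) (at z)" "g t - g 0 = (t - 0) * l"
    using MVT[OF t] by blast
  have "l = \<psi> (u + t *\<^sub>R b + z *\<^sub>R a) - \<psi> (u + z *\<^sub>R a)"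
    using DERIV_unique[OF z(3) gder] z by auto
  with z(4) have "\<phi> (u + t *\<^sub>R b + t *\<^sub>R a) - \<phi> (u + t *\<^sub>R a) - \<phi> (u + t *\<^sub>R b) + \<phi> u
      = t * (\<psi> (u + t *\<^sub>R b + z *\<^sub>R a) - \<psi> (u + z *\<^sub>R a))"
    unfolding g_def by simp
  with z(1,2) show ?thesis using that unfolding \<psi>_def by blast
qed

lemma step_in_ball:
  fixes a b :: "'a::real_normed_vector"
  assumes "norm a = 1" "norm b = 1" "0 \<le> s" "s \<le> t" "0 \<le> c" "c \<le> t" "3 * t < r"
  shows "u + c *\<^sub>R b + s *\<^sub>R a \<in> ball u r"
proof -
  have "norm (c *\<^sub>R b + s *\<^sub>R a) \<le> c + s"
    using norm_triangle_ineq[of "c *\<^sub>R b" "s *\<^sub>R a"] assms by simp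
  then show ?thesis using assms
    by (simp add: dist_norm add.assoc norm_minus_commute[of "c *\<^sub>R b + s *\<^sub>R a" 0, simplified])
qed

lemma derivative_difference_estimate:
  fixes \<psi> :: "'a::real_normed_vector \<Rightarrow> real"
  assumes lin: "linear L'" and e: "e > 0"
    and approx: "\<And>y. norm (y - u) < d \<Longrightarrow> \<bar>\<psi> y - \<psi> u - L' (y - u)\<bar> \<le> e * norm (y - u)"
    and na: "norm a = 1" and nb: "norm b = 1" and z: "0 < z" "z < t" and td: "3 * t < d"
  shows "\<bar>(\<psi> (u + t *\<^sub>R b + z *\<^sub>R a) - \<psi> (u + z *\<^sub>R a)) - t * L' b\<bar> < 4 * e * t"
proof -
  have bound: "\<bar>\<psi> y - \<psi> u - L' (y - u)\<bar> \<le> e * c" if "norm (y - u) \<le> c" "c < d" for y c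
  proof -
    have "\<bar>\<psi> y - \<psi> u - L' (y - u)\<bar> \<le> e * norm (y - u)"
      using approx[of y] that by simp
    also have "\<dots> \<le> e * c"
      using that e by (intro mult_left_mono) auto
    finally show ?thesis .
  qed
  define y1 where "y1 = u + t *\<^sub>R b + z *\<^sub>R a"
  define y2 where "y2 = u + z *\<^sub>R a"
  have "norm (y1 - u) \<le> 2 * t"
    using norm_triangle_ineq[of "t *\<^sub>R b" "z *\<^sub>R a"] na nb z by (simp add: y1_def)
  then have e1: "\<bar>\<psi> y1 - \<psi> u - L' (y1 - u)\<bar> \<le> e * (2 * t)"
    using bound[of y1 "2 * t"] td z by simp
  have "norm (y2 - u) \<le> t" using na z by (simp add: y2_def)
  then have e2: "\<bar>\<psi> y2 - \<psi> u - L' (y2 - u)\<bar> \<le> e * t"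
    using bound[of y2 t] td z by simp
  have "L' (y1 - u) - L' (y2 - u) = t * L' b"
    unfolding y1_def y2_def using lin by (simp add: linear_add linear_cmul algebra_simps)
  then have "\<bar>(\<psi> y1 - \<psi> y2) - t * L' b\<bar> \<le> e * (2 * t) + e * t"
    using e1 e2 by linarith
  also have "\<dots> < 4 * e * t" using e z by simp
  finally show ?thesis unfolding y1_def y2_def .
qed

text \<open>The symmetric second difference quotient converges to the mixed partial derivative
  \<open>\<partial>\<^sub>j\<partial>\<^sub>i \<phi>\<close> as soon as \<open>\<partial>\<^sub>i \<phi>\<close> is differentiable; by symmetry of the quotient this yields
  Schwarz's theorem.\<close>

lemma second_difference_tendsto:
  fixes \<phi> :: "real^'n::finite \<Rightarrow> real"
  assumes U: "open U" "u \<in> U" and d1: "\<And>v. v \<in> U \<Longrightarrow> \<phi> differentiable (at v)"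
    and d2: "\<And>v. v \<in> U \<Longrightarrow> pd i \<phi> differentiable (at v)"
  shows "((\<lambda>t. (\<phi> (u + t *\<^sub>R axis i 1 + t *\<^sub>R axis j 1) - \<phi> (u + t *\<^sub>R axis i 1)
                 - \<phi> (u + t *\<^sub>R axis j 1) + \<phi> u) / t^2) \<longlongrightarrow> pd j (pd i \<phi>) u) (at_right 0)"
proof -
  define a :: "real^'n" where "a = axis i 1"
  define b :: "real^'n" where "b = axis j 1"
  have na: "norm a = 1" and nb: "norm b = 1" by (simp_all add: a_def b_def)
  define \<psi> where "\<psi> = pd i \<phi>"
  have \<psi>_eq: "\<psi> w = frechet_derivative \<phi> (at w) a" for w
    by (simp add: \<psi>_def pd_def a_def)
  define L' where "L' = frechet_derivative \<psi> (at u)"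
  have \<psi>d: "(\<psi> has_derivative L') (at u)"
    unfolding L'_def \<psi>_def using d2 U frechet_derivative_works by blast
  have L'lin: "linear L'" using \<psi>d has_derivative_linear by blast
  have Lval: "pd j (pd i \<phi>) u = L' b" unfolding pd_def L'_def \<psi>_def b_def ..
  obtain r where r: "r > 0" "ball u r \<subseteq> U" using U openE by blast
  show ?thesis
    unfolding Lval tendsto_iff dist_real_def eventually_at_right[OF zero_less_one]
  proof (intro allI impI)
    fix \<epsilon> :: real assume \<epsilon>: "\<epsilon> > 0"
    obtain d where d: "d > 0"
      "\<And>y. norm (y - u) < d \<Longrightarrow> \<bar>\<psi> y - \<psi> u - L' (y - u)\<bar> \<le> (\<epsilon>/4) * norm (y - u)"
      using \<psi>d[unfolded has_derivative_at_alt] \<epsilon>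
      by (metis divide_pos_pos real_norm_def zero_less_numeral)
    define T where "T = min 1 (min (d/3) (r/3))"
    have T: "T > 0" using d r by (auto simp: T_def)
    show "\<exists>B>0. \<forall>t>0. t < B \<longrightarrow> \<bar>(\<phi> (u + t *\<^sub>R axis i 1 + t *\<^sub>R axis j 1) - \<phi> (u + t *\<^sub>R axis i 1)
                 - \<phi> (u + t *\<^sub>R axis j 1) + \<phi> u) / t^2 - L' b\<bar> < \<epsilon>"
    proof (intro exI[of _ T] conjI allI impI)
      fix t :: real assume t: "t > 0" "t < T"
      have tr: "3 * t < r" and td: "3 * t < d" using t by (auto simp: T_def)
      have inU: "u + c *\<^sub>R b + s *\<^sub>R a \<in> U" if "0 \<le> s" "s \<le> t" "0 \<le> c" "c \<le> t" for s c
        using step_in_ball[OF na nb that tr] r(2) by blast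
      obtain z where z: "0 < z" "z < t"
        and Delta: "\<phi> (u + t *\<^sub>R b + t *\<^sub>R a) - \<phi> (u + t *\<^sub>R a) - \<phi> (u + t *\<^sub>R b) + \<phi> u
          = t * (\<psi> (u + t *\<^sub>R b + z *\<^sub>R a) - \<psi> (u + z *\<^sub>R a))"
        using second_difference_mean_value[OF t(1) inU d1] unfolding \<psi>_eq by blast
      have swap: "u + t *\<^sub>R b + t *\<^sub>R a = u + t *\<^sub>R a + t *\<^sub>R b"
        by (simp add: add.assoc add.commute)
      define X where "X = \<psi> (u + t *\<^sub>R b + z *\<^sub>R a) - \<psi> (u + z *\<^sub>R a)"
      have quot: "\<phi> (u + t *\<^sub>R axis i 1 + t *\<^sub>R axis j 1) - \<phi> (u + t *\<^sub>R axis i 1)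
                 - \<phi> (u + t *\<^sub>R axis j 1) + \<phi> u = t * X"
        using Delta[unfolded swap] unfolding a_def b_def X_def by (simp only:)
      have cancel: "(t * X) / t^2 - L' b = (X - t * L' b) / t"
        using t by (simp add: field_simps power2_eq_square)
      have "\<bar>(\<phi> (u + t *\<^sub>R axis i 1 + t *\<^sub>R axis j 1) - \<phi> (u + t *\<^sub>R axis i 1)
                 - \<phi> (u + t *\<^sub>R axis j 1) + \<phi> u) / t^2 - L' b\<bar> = \<bar>X - t * L' b\<bar> / t"
        unfolding quot cancel abs_divide using t by simp
      also have "\<dots> < \<epsilon>"
        using derivative_difference_estimate[OF L'lin _ d(2) na nb z td] \<epsilon>
        unfolding X_def by (subst pos_divide_less_eq[OF t(1)]) simp
      finally show "\<bar>(\<phi> (u + t *\<^sub>R axis i 1 + t *\<^sub>R axis j 1) - \<phi> (u + t *\<^sub>R axis i 1)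
                 - \<phi> (u + t *\<^sub>R axis j 1) + \<phi> u) / t^2 - L' b\<bar> < \<epsilon>" .
    qed (rule T)
  qed
qed

lemma pd_commute_real:
  fixes \<phi> :: "real^'n::finite \<Rightarrow> real"
  assumes U: "open U" "u \<in> U" and d1: "\<And>v. v \<in> U \<Longrightarrow> \<phi> differentiable (at v)"
    and d2: "\<And>v k. v \<in> U \<Longrightarrow> pd k \<phi> differentiable (at v)"
  shows "pd i (pd j \<phi>) u = pd j (pd i \<phi>) u"
proof -
  have "((\<lambda>t. (\<phi> (u + t *\<^sub>R axis i 1 + t *\<^sub>R axis j 1) - \<phi> (u + t *\<^sub>R axis i 1)
                 - \<phi> (u + t *\<^sub>R axis j 1) + \<phi> u) / t^2) \<longlongrightarrow> pd i (pd j \<phi>) u) (at_right 0)"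
    using second_difference_tendsto[OF U d1 d2, of j i] by (simp add: algebra_simps)
  from tendsto_unique[OF _ this second_difference_tendsto[OF U d1 d2]] show ?thesis by simp
qed

text \<open>Schwarz's theorem for vector-valued maps, by applying the real case to every component
  \<open>\<langle>G, c\<rangle>\<close>.\<close>

lemma pd_commute:
  fixes G :: "real^'n::finite \<Rightarrow> 'b::euclidean_space"
  assumes U: "open U" "u \<in> U" and d1: "\<And>v. v \<in> U \<Longrightarrow> G differentiable (at v)"
    and d2: "\<And>v k. v \<in> U \<Longrightarrow> pd k G differentiable (at v)"
  shows "pd i (pd j G) u = pd j (pd i G) u"
proof -
  have comp: "inner (pd i (pd j G) u) c = inner (pd j (pd i G) u) c" for c
  proof -
    define \<phi> where "\<phi> w = inner (G w) c" for w
    have pk: "pd k \<phi> w = inner (pd k G w) c" if "w \<in> U" for k w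
      unfolding \<phi>_def using pd_inner_const[OF d1[OF that]] .
    have d1': "\<And>v. v \<in> U \<Longrightarrow> \<phi> differentiable (at v)"
      unfolding \<phi>_def using d1 by simp
    have d2': "pd k \<phi> differentiable (at v)" if "v \<in> U" for v k
      using differentiable_cong_open[OF U(1) that, of "\<lambda>w. inner (pd k G w) c" "pd k \<phi>"] pk d2[OF that, of k]
      by simp
    have "pd a (pd b \<phi>) u = inner (pd a (pd b G) u) c" for a b
      using pd_cong_open[OF U(1) U(2), of "pd b \<phi>" "\<lambda>w. inner (pd b G w) c"] pk
        pd_inner_const[OF d2[OF U(2)]] by simp
    then show ?thesis using pd_commute_real[OF U d1' d2', of i j] by simp
  qed
  have "inner (pd i (pd j G) u - pd j (pd i G) u) (pd i (pd j G) u - pd j (pd i G) u) = 0"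
    using comp[of "pd i (pd j G) u - pd j (pd i G) u"] by (simp only: inner_diff_left)
  then show ?thesis by simp
qed

lemma smooth_pd_commute:
  fixes G :: "real^'n::finite \<Rightarrow> 'b::euclidean_space"
  assumes "open U" "smooth_on U G" "u \<in> U"
  shows "pd i (pd j G) u = pd j (pd i G) u"
  using pd_commute[OF assms(1,3)] smooth_on_differentiable[OF assms(2)]
    smooth_on_pd_differentiable[OF assms(2)] by blast

lemma smooth_pd_commute3:
  fixes G :: "real^'n::finite \<Rightarrow> 'b::euclidean_space"
  assumes U: "open U" "smooth_on U G" "u \<in> U"
  shows "pd i (pd j (pd m G)) u = pd m (pd i (pd j G)) u"
proof -
  have "pd i (pd j (pd m G)) u = pd i (pd m (pd j G)) u"
    using pd_cong_open[OF U(1) U(3), of "pd j (pd m G)" "pd m (pd j G)"] smooth_pd_commute[OF U(1,2)] by blast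
  also have "\<dots> = pd m (pd i (pd j G)) u"
    using pd_commute[OF U(1,3), of "pd j G"] smooth_on_pd_differentiable[OF U(2)]
      smooth_on_pd2_differentiable[OF U(2)] by blast
  finally show ?thesis .
qed


lemma Jc_add: "Jc (x + y) = Jc x + Jc y"
  by (simp add: Jc_def vec_eq_iff distrib_left)

lemma Jc_scaleR: "Jc (r *\<^sub>R x) = r *\<^sub>R Jc x"
  by (simp add: Jc_def vec_eq_iff scaleR_conv_of_real)

lemma Jc_zero [simp]: "Jc 0 = 0"
  by (simp add: Jc_def vec_eq_iff)

lemma Jc_sum: "Jc (\<Sum>k\<in>I. x k) = (\<Sum>k\<in>I. Jc (x k))"
  by (simp add: Jc_def vec_eq_iff sum_distrib_left)

lemma Jc_Jc: "Jc (Jc x) = - x"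
  by (simp add: Jc_def vec_eq_iff)

lemma inner_Jc_Jc: "inner (Jc x) (Jc y) = inner x y"
  by (simp add: Jc_def inner_vec_def inner_complex_def algebra_simps)

lemma inner_Jc_left: "inner (Jc x) y = - inner x (Jc y)"
  by (simp add: Jc_def inner_vec_def inner_complex_def algebra_simps sum_negf[symmetric])

lemma bounded_linear_Jc: "bounded_linear Jc"
proof (rule bounded_linear_intro[where K=1])
  fix x :: "complex^'n"
  show "norm (Jc x) \<le> norm x * 1"
    by (simp add: norm_eq_sqrt_inner inner_Jc_Jc)
qed (simp_all add: Jc_add Jc_scaleR)

lemma differentiable_Jc:
  "a differentiable (at v) \<Longrightarrow> (\<lambda>w. Jc (a w)) differentiable (at v)"
  unfolding differentiable_def by (blast intro: bounded_linear.has_derivative[OF bounded_linear_Jc])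

lemma pd_Jc: "a differentiable (at v) \<Longrightarrow> pd i (\<lambda>w. Jc (a w)) v = Jc (pd i a v)"
  by (rule pd_linear[OF bounded_linear_Jc])

lemma matrix_inv_inverse:
  fixes A :: "'a::field^'n::finite^'n"
  assumes "invertible A"
  shows "A ** matrix_inv A = mat 1" "matrix_inv A ** A = mat 1"
proof -
  have "\<exists>A'. A ** A' = mat 1 \<and> A' ** A = mat 1" using assms unfolding invertible_def .
  from someI_ex[OF this] show "A ** matrix_inv A = mat 1" "matrix_inv A ** A = mat 1"
    unfolding matrix_inv_def by auto
qed

lemma matrix_inv_symmetric:
  fixes A :: "'a::field^'n::finite^'n"
  assumes "invertible A" "transpose A = A"
  shows "transpose (matrix_inv A) = matrix_inv A"
proof -
  let ?B = "matrix_inv A"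
  have "transpose (A ** ?B) = transpose (mat 1 :: 'a^'n^'n)"
    using matrix_inv_inverse(1)[OF assms(1)] by (rule arg_cong)
  then have left: "transpose ?B ** A = mat 1"
    by (simp only: matrix_transpose_mul assms(2) transpose_mat)
  have "transpose ?B = transpose ?B ** (A ** ?B)"
    by (simp only: matrix_inv_inverse(1)[OF assms(1)] matrix_mul_rid)
  also have "\<dots> = ?B"
    by (simp only: matrix_mul_assoc left matrix_mul_lid)
  finally show ?thesis .
qed

text \<open>Cramer's rule for the entries of the inverse; it shows that the entries of the inverse
  depend differentiably on those of the matrix.\<close>

lemma matrix_inv_cramer:
  fixes A :: "real^'n::finite^'n"
  assumes d: "det A \<noteq> 0"
  shows "matrix_inv A $ i $ j = det (\<chi> a b. if b = i then (if a = j then 1 else 0) else A$a$b) / det A"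
proof -
  have inv: "invertible A" using d invertible_det_nz by blast
  define x where "x = matrix_inv A *v axis j 1"
  have "A *v x = axis j 1" unfolding x_def
    by (simp add: matrix_vector_mul_assoc matrix_inv_inverse(1)[OF inv])
  then have "x $ i = det (\<chi> a b. if b = i then (axis j 1 :: real^'n)$a else A$a$b) / det A"
    using cramer[OF d] by simp
  moreover have "x $ i = matrix_inv A $ i $ j"
    unfolding x_def by (simp add: matrix_vector_mult_def axis_def if_distrib cong: if_cong)
  moreover have "(\<chi> a b. if b = i then (axis j 1 :: real^'n)$a else A$a$b)
      = (\<chi> a b. if b = i then (if a = j then 1 else 0) else A$a$b)"
    by (simp add: axis_def vec_eq_iff)
  ultimately show ?thesis by simp
qed

lemma det_differentiable:
  fixes M :: "'a::real_normed_vector \<Rightarrow> real^'n::finite^'n"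
  assumes "\<And>a b. (\<lambda>v. M v $ a $ b) differentiable (at x)"
  shows "(\<lambda>v. det (M v)) differentiable (at x)"
proof -
  from assms obtain D where "\<And>a b. ((\<lambda>v. M v $ a $ b) has_derivative D a b) (at x)"
    unfolding differentiable_def by metis
  then have "(\<lambda>v. \<Prod>i\<in>UNIV. M v $ i $ p i) differentiable (at x)" for p :: "'n \<Rightarrow> 'n"
    unfolding differentiable_def
    using has_derivative_prod[of UNIV "\<lambda>i v. M v $ i $ p i" "\<lambda>i. D i (p i)" x UNIV] by blast
  then show ?thesis
    unfolding det_def by (intro differentiable_sum differentiable_mult differentiable_const) auto
qed

section \<open>The metric of an immersion\<close>

locale immersed_chart =
  fixes U :: "(real^'n::finite) set" and F :: "real^'n \<Rightarrow> complex^'n"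
  assumes open_U: "open U" and smooth_F: "smooth_on U F" and immersion: "immersion_on U F"
begin

lemma F_differentiable: "v \<in> U \<Longrightarrow> F differentiable (at v)"
  using smooth_on_differentiable[OF smooth_F] .

lemma dF_differentiable: "v \<in> U \<Longrightarrow> pd i F differentiable (at v)"
  using smooth_on_pd_differentiable[OF smooth_F] .

lemma ddF_differentiable: "v \<in> U \<Longrightarrow> pd i (pd j F) differentiable (at v)"
  using smooth_on_pd2_differentiable[OF smooth_F] .

lemma differential_expansion:
  assumes "v \<in> U"
  shows "frechet_derivative F (at v) h = (\<Sum>i\<in>UNIV. h$i *\<^sub>R pd i F v)"
proof -
  have lin: "linear (frechet_derivative F (at v))"
    using F_differentiable[OF assms] by (rule linear_frechet_derivative)
  have "h = (\<Sum>i\<in>UNIV. h$i *\<^sub>R axis i (1::real))"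
    using basis_expansion[of h] by (simp add: scalar_mult_eq_scaleR)
  then have "frechet_derivative F (at v) h
      = frechet_derivative F (at v) (\<Sum>i\<in>UNIV. h$i *\<^sub>R axis i (1::real))"
    by simp
  also have "\<dots> = (\<Sum>i\<in>UNIV. h$i *\<^sub>R frechet_derivative F (at v) (axis i 1))"
    using lin by (simp add: linear_sum linear_scale)
  finally show ?thesis by (simp add: pd_def)
qed

lemma frame_independent:
  assumes "v \<in> U" "(\<Sum>i\<in>UNIV. c$i *\<^sub>R pd i F v) = 0"
  shows "c = 0"
proof -
  have lin: "linear (frechet_derivative F (at v))"
    using F_differentiable[OF assms(1)] by (rule linear_frechet_derivative)
  have "frechet_derivative F (at v) c = frechet_derivative F (at v) 0"
    using differential_expansion[OF assms(1)] assms(2) lin by (simp add: linear_0)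
  then show ?thesis using immersion assms(1) unfolding immersion_on_def inj_def by blast
qed

lemma gmat_invertible:
  assumes v: "v \<in> U"
  shows "invertible (gmat F v)"
proof -
  have ker: "c = 0" if "gmat F v *v c = 0" for c
  proof -
    define w where "w = (\<Sum>i\<in>UNIV. c$i *\<^sub>R pd i F v)"
    have "inner w w = (\<Sum>i\<in>UNIV. c$i * inner (pd i F v) w)"
      unfolding w_def by (simp add: inner_sum_left)
    also have "\<dots> = (\<Sum>i\<in>UNIV. c$i * (gmat F v *v c)$i)"
    proof (rule sum.cong[OF refl])
      fix i
      have "inner (pd i F v) w = (\<Sum>j\<in>UNIV. c$j * inner (pd i F v) (pd j F v))"
        unfolding w_def by (simp add: inner_sum_right)
      also have "\<dots> = (gmat F v *v c)$i"
        by (simp add: matrix_vector_mult_def gmat_def mult.commute)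
      finally show "c$i * inner (pd i F v) w = c$i * (gmat F v *v c)$i" by simp
    qed
    also have "\<dots> = 0" using that by simp
    finally have "w = 0" by simp
    then show ?thesis using frame_independent[OF v] unfolding w_def by blast
  qed
  then obtain B where "B ** gmat F v = mat 1" using matrix_left_invertible_ker by blast
  then show ?thesis unfolding invertible_def using matrix_left_right_inverse by blast
qed

lemma ginv_gmat:
  "v \<in> U \<Longrightarrow> (\<Sum>b\<in>UNIV. ginv F v a b * inner (pd b F v) (pd c F v)) = (if a = c then 1 else 0)"
  using arg_cong[OF matrix_inv_inverse(2)[OF gmat_invertible], of v "\<lambda>M. M $ a $ c"]
  by (simp add: matrix_matrix_mult_def ginv_def gmat_def mat_def)

lemma gmat_ginv:
  "v \<in> U \<Longrightarrow> (\<Sum>b\<in>UNIV. inner (pd a F v) (pd b F v) * ginv F v b c) = (if a = c then 1 else 0)"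
  using arg_cong[OF matrix_inv_inverse(1)[OF gmat_invertible], of v "\<lambda>M. M $ a $ c"]
  by (simp add: matrix_matrix_mult_def ginv_def gmat_def mat_def)

lemma ginv_sym:
  assumes "v \<in> U"
  shows "ginv F v a b = ginv F v b a"
proof -
  have "transpose (gmat F v) = gmat F v"
    by (simp add: transpose_def gmat_def vec_eq_iff inner_commute)
  from matrix_inv_symmetric[OF gmat_invertible[OF assms] this]
  have "transpose (matrix_inv (gmat F v)) $ b $ a = matrix_inv (gmat F v) $ b $ a" by simp
  then show ?thesis unfolding ginv_def by (simp add: transpose_def)
qed

lemma ginv_differentiable:
  assumes v: "v \<in> U"
  shows "(\<lambda>w. ginv F w a b) differentiable (at v)"
proof -
  define N where "N w = det (\<chi> p q. if q = a then (if p = b then 1 else 0) else gmat F w $ p $ q)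
    / det (gmat F w)" for w
  have g: "(\<lambda>w. gmat F w $ p $ q) differentiable (at v)" for p q
    by (simp add: gmat_def dF_differentiable[OF v])
  have if_differentiable: "(\<lambda>x. if P then c else h x) differentiable (at v)"
    if "h differentiable (at v)" for P c h
    using that by (cases P) auto
  have "(\<lambda>w. (\<chi> p q. if q = a then (if p = b then 1 else 0) else gmat F w $ p $ q) $ p $ q)
      differentiable (at v)" for p q
    using if_differentiable[OF g] by simp
  then have "N differentiable (at v)" unfolding N_def
    by (rule differentiable_divide[OF det_differentiable det_differentiable[OF g]])
      (simp add: invertible_det_nz[symmetric] gmat_invertible[OF v])
  moreover have "N w = ginv F w a b" if "w \<in> U" for w
    unfolding N_def ginv_def
    by (rule matrix_inv_cramer[symmetric]) (simp add: invertible_det_nz[symmetric] gmat_invertible[OF that])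
  ultimately show ?thesis
    using differentiable_cong_open[OF open_U v, of N "\<lambda>w. ginv F w a b"] by simp
qed

lemma raise_lower_index:
  assumes v: "v \<in> U"
  shows "(\<Sum>i\<in>UNIV. (\<Sum>j\<in>UNIV. ginv F v i j * c j) * inner (pd i F v) (pd p F v)) = c p"
proof -
  have "(\<Sum>i\<in>UNIV. (\<Sum>j\<in>UNIV. ginv F v i j * c j) * inner (pd i F v) (pd p F v))
      = (\<Sum>j\<in>UNIV. c j * (\<Sum>i\<in>UNIV. ginv F v j i * inner (pd i F v) (pd p F v)))"
    apply (simp add: sum_distrib_left sum_distrib_right)
    apply (subst sum.swap)
    apply (simp add: ginv_sym[OF v] ac_simps)
    done
  also have "\<dots> = c p" by (simp add: ginv_gmat[OF v] if_distrib cong: if_cong)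
  finally show ?thesis .
qed

lemma inner_raised_combination:
  assumes v: "v \<in> U"
  shows "inner (\<Sum>i\<in>UNIV. \<Sum>j\<in>UNIV. (ginv F v i j * c j) *\<^sub>R pd i F v) (pd p F v) = c p"
  using raise_lower_index[OF v] by (simp add: inner_sum_left sum_distrib_right)

lemma inner_grad_dF: "v \<in> U \<Longrightarrow> inner (grad F \<phi> v) (pd l F v) = pd l \<phi> v"
  unfolding grad_def using inner_raised_combination[of v "\<lambda>j. pd j \<phi> v"] by simp

lemma pd_ginv:
  assumes v: "v \<in> U"
  shows "pd m (\<lambda>w. ginv F w i j) v = - (\<Sum>a\<in>UNIV. \<Sum>b\<in>UNIV. ginv F v i a *
      (inner (pd m (pd a F) v) (pd b F v) + inner (pd a F v) (pd m (pd b F) v)) * ginv F v b j)"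
proof -
  define D where "D a b = pd m (\<lambda>w. ginv F w a b) v" for a b
  define dG where "dG a b = inner (pd m (pd a F) v) (pd b F v) + inner (pd a F v) (pd m (pd b F) v)"
    for a b
  have product_rule:
    "(\<Sum>b\<in>UNIV. D a b * inner (pd b F v) (pd c F v)) = - (\<Sum>b\<in>UNIV. ginv F v a b * dG b c)" for a c
  proof -
    have "pd m (\<lambda>w. \<Sum>b\<in>UNIV. ginv F w a b * inner (pd b F w) (pd c F w)) v
        = pd m (\<lambda>w. if a = c then 1 else 0) v"
      using pd_cong_open[OF open_U v, of "\<lambda>w. \<Sum>b\<in>UNIV. ginv F w a b * inner (pd b F w) (pd c F w)"
          "\<lambda>w. if a = c then 1 else 0"] ginv_gmat by simp
    moreover have "pd m (\<lambda>w. \<Sum>b\<in>UNIV. ginv F w a b * inner (pd b F w) (pd c F w)) v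
       = (\<Sum>b\<in>UNIV. D a b * inner (pd b F v) (pd c F v) + ginv F v a b * dG b c)"
      by (simp add: pd_sum pd_mult pd_inner ginv_differentiable[OF v] dF_differentiable[OF v]
          D_def dG_def)
    ultimately show ?thesis by (simp add: pd_const sum.distrib eq_neg_iff_add_eq_0)
  qed
  have "D i j = (\<Sum>c\<in>UNIV. (\<Sum>b\<in>UNIV. D i b * inner (pd b F v) (pd c F v)) * ginv F v c j)"
  proof -
    have "(\<Sum>c\<in>UNIV. (\<Sum>b\<in>UNIV. D i b * inner (pd b F v) (pd c F v)) * ginv F v c j)
        = (\<Sum>b\<in>UNIV. D i b * (\<Sum>c\<in>UNIV. inner (pd b F v) (pd c F v) * ginv F v c j))"
      apply (simp add: sum_distrib_left sum_distrib_right)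
      apply (subst sum.swap)
      apply (simp add: mult.assoc)
      done
    also have "\<dots> = D i j" by (simp add: gmat_ginv[OF v] if_distrib cong: if_cong)
    finally show ?thesis by simp
  qed
  also have "\<dots> = (\<Sum>c\<in>UNIV. - (\<Sum>b\<in>UNIV. ginv F v i b * dG b c) * ginv F v c j)"
    by (simp only: product_rule)
  also have "\<dots> = - (\<Sum>a\<in>UNIV. \<Sum>b\<in>UNIV. ginv F v i a * dG a b * ginv F v b j)"
    apply (simp add: sum_distrib_right sum_negf)
    apply (subst sum.swap)
    apply simp
    done
  finally show ?thesis unfolding D_def dG_def .
qed

end

section \<open>Lagrangian immersions: the adapted frame\<close>

text \<open>The normal projection written in the frame \<open>J \<partial>\<^sub>k F\<close>; for a Lagrangian immersion it agrees
  with \<open>nproj\<close> (lemma \<open>nproj_eq_frame\<close>).\<close>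

definition nproj_frame :: "(real^'n::finite \<Rightarrow> complex^'n) \<Rightarrow> real^'n \<Rightarrow> complex^'n \<Rightarrow> complex^'n" where
  "nproj_frame F v X =
     (\<Sum>k\<in>UNIV. \<Sum>l\<in>UNIV. (ginv F v k l * inner X (Jc (pd l F v))) *\<^sub>R Jc (pd k F v))"

definition adapted_frame :: "(real^'n::finite \<Rightarrow> complex^'n) \<Rightarrow> real^'n \<Rightarrow> 'n + 'n \<Rightarrow> complex^'n" where
  "adapted_frame F v s = (case s of Inl i \<Rightarrow> pd i F v | Inr i \<Rightarrow> Jc (pd i F v))"

lemma sum_UNIV_Plus:
  "(\<Sum>s\<in>(UNIV::('a::finite + 'b::finite) set). g s) = (\<Sum>i\<in>UNIV. g (Inl i)) + (\<Sum>i\<in>UNIV. g (Inr i))"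
  using sum.Plus[of "UNIV::'a set" "UNIV::'b set" g] by (simp add: comp_def)

locale lagrangian_chart = immersed_chart U F
  for U :: "(real^'n::finite) set" and F :: "real^'n \<Rightarrow> complex^'n" +
  assumes lagrangian: "lagrangian_on U F"
begin

lemma inner_J_dF_dF: "v \<in> U \<Longrightarrow> inner (Jc (pd i F v)) (pd j F v) = 0"
  using lagrangian unfolding lagrangian_on_def by blast

lemma inner_dF_J_dF: "v \<in> U \<Longrightarrow> inner (pd j F v) (Jc (pd i F v)) = 0"
  using inner_J_dF_dF by (simp add: inner_commute)

text \<open>A tangent vector plus \<open>J\<close> times a tangent vector vanishes only if both vanish, because the
  two summands are orthogonal.\<close>

lemma frame_combination_zero:
  assumes v: "v \<in> U"
    and zero: "(\<Sum>i\<in>UNIV. a$i *\<^sub>R pd i F v) + Jc (\<Sum>i\<in>UNIV. b$i *\<^sub>R pd i F v) = 0"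
  shows "a = 0" "b = 0"
proof -
  define w where "w = (\<Sum>i\<in>UNIV. a$i *\<^sub>R pd i F v)"
  define z where "z = (\<Sum>i\<in>UNIV. b$i *\<^sub>R pd i F v)"
  have "inner (Jc z) (pd p F v) = 0" for p
    unfolding z_def by (simp add: Jc_sum Jc_scaleR inner_sum_left inner_J_dF_dF[OF v])
  then have "inner w (pd p F v) = 0" for p
    using arg_cong[OF zero, of "\<lambda>x. inner x (pd p F v)"]
    by (simp add: inner_add_left w_def[symmetric] z_def[symmetric])
  then have "inner w w = 0"
    by (subst (2) w_def) (simp add: inner_sum_right)
  then have "w = 0" by simp
  then show "a = 0" using frame_independent[OF v] w_def by simp
  have "Jc z = 0" using zero \<open>w = 0\<close> by (simp add: w_def[symmetric] z_def[symmetric])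
  then have "z = 0" using Jc_Jc[of z] by simp
  then show "b = 0" using frame_independent[OF v] z_def by simp
qed

text \<open>Hence the adapted frame is linearly independent, and being of size \<open>2n\<close> it is a basis of
  \<open>\<complex>\<^sup>n = \<real>\<^sup>2\<^sup>n\<close>.\<close>

lemma adapted_frame_combination_zero:
  assumes v: "v \<in> U" and zero: "(\<Sum>s\<in>UNIV. c s *\<^sub>R adapted_frame F v s) = 0"
  shows "c = (\<lambda>_. 0)"
proof -
  have "(\<Sum>i\<in>UNIV. (\<chi> k. c (Inl k))$i *\<^sub>R pd i F v) + Jc (\<Sum>i\<in>UNIV. (\<chi> k. c (Inr k))$i *\<^sub>R pd i F v) = 0"
    using zero by (simp add: sum_UNIV_Plus adapted_frame_def Jc_sum Jc_scaleR)
  from frame_combination_zero[OF v this] have "c (Inl i) = 0" "c (Inr i) = 0" for i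
    by (simp_all add: vec_eq_iff)
  then show ?thesis by (metis sum.exhaust)
qed

lemma inj_adapted_frame:
  assumes v: "v \<in> U"
  shows "inj (adapted_frame F v)"
proof
  fix s t assume st: "adapted_frame F v s = adapted_frame F v t"
  show "s = t"
  proof (rule ccontr)
    assume ne: "s \<noteq> t"
    define c where "c x = (if x = s then 1 else if x = t then -1 else (0::real))" for x
    have "(\<Sum>x\<in>UNIV. c x *\<^sub>R adapted_frame F v x) = (\<Sum>x\<in>{s,t}. c x *\<^sub>R adapted_frame F v x)"
      by (rule sum.mono_neutral_right) (auto simp: c_def)
    also have "\<dots> = 0" using ne st by (simp add: c_def)
    finally have "c = (\<lambda>_. 0)" by (rule adapted_frame_combination_zero[OF v])
    then show False by (metis c_def zero_neq_one)
  qed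
qed

lemma adapted_frame_spans:
  assumes v: "v \<in> U"
  shows "span (range (adapted_frame F v)) = UNIV"
proof -
  have basis: "independent (range (adapted_frame F v))"
  proof (rule independent_if_scalars_zero)
    show "finite (range (adapted_frame F v))" by simp
    fix g x assume g: "(\<Sum>x\<in>range (adapted_frame F v). g x *\<^sub>R x) = 0"
      and x: "x \<in> range (adapted_frame F v)"
    have "(\<Sum>s\<in>UNIV. g (adapted_frame F v s) *\<^sub>R adapted_frame F v s) = 0"
      using g by (simp add: sum.reindex[OF inj_adapted_frame[OF v]])
    from adapted_frame_combination_zero[OF v this] x show "g x = 0" by (auto dest: fun_cong)
  qed
  have "card (range (adapted_frame F v)) = DIM(complex^'n)"
    using card_image[OF inj_adapted_frame[OF v]] by (simp add: card_Plus)
  then show ?thesis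
    using card_ge_dim_independent[OF subset_UNIV basis] by auto
qed

lemma orthogonal_to_frame_eq_0:
  assumes v: "v \<in> U" and tangential: "\<And>p. inner Y (pd p F v) = 0"
    and normal: "\<And>p. inner Y (Jc (pd p F v)) = 0"
  shows "Y = 0"
proof -
  obtain c where c: "Y = (\<Sum>x\<in>range (adapted_frame F v). c x *\<^sub>R x)"
    using span_finite[of "range (adapted_frame F v)"] adapted_frame_spans[OF v] by auto
  have "inner Y x = 0" if "x \<in> range (adapted_frame F v)" for x
    using that tangential normal by (auto simp: adapted_frame_def split: sum.splits)
  then have "inner Y Y = 0"
    by (subst (2) c) (simp add: inner_sum_right)
  then show ?thesis by simp
qed

lemma inner_raised_combination_J:
  "v \<in> U \<Longrightarrow> inner (\<Sum>i\<in>UNIV. \<Sum>j\<in>UNIV. (ginv F v i j * c j) *\<^sub>R pd i F v) (Jc (pd p F v)) = 0"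
  by (simp add: inner_sum_left inner_dF_J_dF)

lemma inner_J_raised_combination:
  "v \<in> U \<Longrightarrow> inner (\<Sum>i\<in>UNIV. \<Sum>j\<in>UNIV. (ginv F v i j * c j) *\<^sub>R Jc (pd i F v)) (pd p F v) = 0"
  by (simp add: inner_sum_left inner_J_dF_dF)

lemma inner_J_raised_combination_J:
  assumes v: "v \<in> U"
  shows "inner (\<Sum>i\<in>UNIV. \<Sum>j\<in>UNIV. (ginv F v i j * c j) *\<^sub>R Jc (pd i F v)) (Jc (pd p F v)) = c p"
  using raise_lower_index[OF v] by (simp add: inner_sum_left sum_distrib_right inner_Jc_Jc)

lemma tangent_normal_decomposition:
  assumes v: "v \<in> U"
  shows "X = tproj F v X + nproj_frame F v X"
proof -
  define Y where "Y = X - tproj F v X - nproj_frame F v X"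
  have "inner Y (pd p F v) = 0" for p
    unfolding Y_def tproj_def nproj_frame_def
    using inner_raised_combination[OF v, of "\<lambda>j. inner X (pd j F v)"]
      inner_J_raised_combination[OF v, of "\<lambda>j. inner X (Jc (pd j F v))"]
    by (simp add: inner_diff_left)
  moreover have "inner Y (Jc (pd p F v)) = 0" for p
    unfolding Y_def tproj_def nproj_frame_def
    using inner_raised_combination_J[OF v, of "\<lambda>j. inner X (pd j F v)"]
      inner_J_raised_combination_J[OF v, of "\<lambda>j. inner X (Jc (pd j F v))"]
    by (simp add: inner_diff_left)
  ultimately have "Y = 0" using orthogonal_to_frame_eq_0[OF v] by blast
  then show ?thesis unfolding Y_def by (simp add: algebra_simps)
qed

lemma nproj_eq_frame: "v \<in> U \<Longrightarrow> nproj F v X = nproj_frame F v X"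
  unfolding nproj_def using tangent_normal_decomposition[of v X] by (simp add: algebra_simps)

lemma inner_nproj_J_dF: "v \<in> U \<Longrightarrow> inner (nproj F v X) (Jc (pd p F v)) = inner X (Jc (pd p F v))"
  unfolding nproj_eq_frame nproj_frame_def
  using inner_J_raised_combination_J[of v "\<lambda>j. inner X (Jc (pd j F v))"] by simp

lemma inner_nproj_dF: "v \<in> U \<Longrightarrow> inner (nproj F v X) (pd p F v) = 0"
  unfolding nproj_eq_frame nproj_frame_def
  using inner_J_raised_combination[of v "\<lambda>j. inner X (Jc (pd j F v))"] by simp

lemma Jgrad_expansion:
  "Jc (grad F \<phi> v) = (\<Sum>i\<in>UNIV. \<Sum>j\<in>UNIV. (ginv F v i j * pd j \<phi> v) *\<^sub>R Jc (pd i F v))"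
  unfolding grad_def by (simp add: Jc_sum Jc_scaleR)

lemma inner_grad_J_dF: "v \<in> U \<Longrightarrow> inner (grad F \<phi> v) (Jc (pd l F v)) = 0"
  unfolding grad_def using inner_raised_combination_J[of v "\<lambda>j. pd j \<phi> v"] by simp

lemma inner_Jgrad_dF: "v \<in> U \<Longrightarrow> inner (Jc (grad F \<phi> v)) (pd l F v) = 0"
  unfolding Jgrad_expansion using inner_J_raised_combination[of v "\<lambda>j. pd j \<phi> v"] by simp

lemma inner_Jgrad_J_dF: "v \<in> U \<Longrightarrow> inner (Jc (grad F \<phi> v)) (Jc (pd l F v)) = pd l \<phi> v"
  using inner_grad_dF by (simp add: inner_Jc_Jc)

text \<open>The cubic form \<open>\<langle>\<partial>\<^sub>i\<partial>\<^sub>j F, J \<partial>\<^sub>l F\<rangle>\<close> is symmetric in \<open>j\<close>, \<open>l\<close> (differentiate the Lagrangian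
  condition); with Schwarz's theorem it is totally symmetric.\<close>

lemma cubic_form_sym:
  assumes v: "v \<in> U"
  shows "inner (pd i (pd j F) v) (Jc (pd l F v)) = inner (pd i (pd l F) v) (Jc (pd j F v))"
proof -
  have "pd i (\<lambda>w. inner (Jc (pd j F w)) (pd l F w)) v = pd i (\<lambda>w. 0) v"
    using pd_cong_open[OF open_U v, of "\<lambda>w. inner (Jc (pd j F w)) (pd l F w)" "\<lambda>w. 0"]
      inner_J_dF_dF by simp
  moreover have "pd i (\<lambda>w. inner (Jc (pd j F w)) (pd l F w)) v
     = inner (Jc (pd i (pd j F) v)) (pd l F v) + inner (Jc (pd j F v)) (pd i (pd l F) v)"
    using pd_inner[OF differentiable_Jc[OF dF_differentiable[OF v]] dF_differentiable[OF v]]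
      pd_Jc[OF dF_differentiable[OF v]] by simp
  ultimately show ?thesis by (simp add: pd_const inner_Jc_left inner_commute)
qed

lemma self_shrinker_J_component:
  assumes "self_shrinker_on U F" and v: "v \<in> U"
  shows "inner (F v) (Jc (pd l F v))
    = -2 * (\<Sum>a\<in>UNIV. \<Sum>b\<in>UNIV. ginv F v a b * inner (pd a (pd b F) v) (Jc (pd l F v)))"
proof -
  have "inner (meancurv F v) (Jc (pd l F v)) = inner (- (1/2) *\<^sub>R nproj F v (F v)) (Jc (pd l F v))"
    using assms unfolding self_shrinker_on_def by simp
  moreover have "inner (meancurv F v) (Jc (pd l F v))
      = (\<Sum>a\<in>UNIV. \<Sum>b\<in>UNIV. ginv F v a b * inner (pd a (pd b F) v) (Jc (pd l F v)))"
    unfolding meancurv_def sff_def by (simp add: inner_sum_left inner_nproj_J_dF[OF v])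
  ultimately show ?thesis using inner_nproj_J_dF[OF v] by simp
qed

text \<open>\<open>L\<close> maps normal fields to normal vectors: every term of its definition is normal.\<close>

lemma Lop_normal:
  assumes v: "v \<in> U" and "inner (V v) (pd p F v) = 0"
  shows "inner (Lop F V v) (pd p F v) = 0"
  using assms unfolding Lop_def nlaplace_def nabn_def sff_def
  by (simp add: inner_add_left inner_diff_left inner_sum_left inner_nproj_dF[OF v])

end

section \<open>An identity of index contractions\<close>

lemma contraction_christoffel_terms:
  fixes gi H :: "'n::finite \<Rightarrow> 'n \<Rightarrow> real" and \<Gamma> :: "'n \<Rightarrow> 'n \<Rightarrow> 'n \<Rightarrow> real"
  assumes gs: "\<And>i j. gi i j = gi j i" and \<Gamma>s: "\<And>i j l. \<Gamma> i j l = \<Gamma> j i l"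
    and Hs: "\<And>i j. H i j = H j i"
  shows "(\<Sum>i\<in>UNIV. \<Sum>j\<in>UNIV. gi i j * (\<Sum>k\<in>UNIV. \<Sum>l\<in>UNIV. gi k l * \<Gamma> j m l * H i k))
       + (\<Sum>i\<in>UNIV. \<Sum>j\<in>UNIV. gi i j * (\<Sum>k\<in>UNIV. \<Sum>l\<in>UNIV. gi k l * H j l * \<Gamma> i m k))
     = (\<Sum>i\<in>UNIV. \<Sum>j\<in>UNIV. (\<Sum>a\<in>UNIV. \<Sum>b\<in>UNIV. gi i a * (\<Gamma> m a b + \<Gamma> m b a) * gi b j) * H i j)"
proof -
  define P1 where "P1 = (\<Sum>i\<in>UNIV. \<Sum>j\<in>UNIV. \<Sum>a\<in>UNIV. \<Sum>b\<in>UNIV. gi i a * \<Gamma> m a b * gi b j * H i j)"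
  define P2 where "P2 = (\<Sum>i\<in>UNIV. \<Sum>j\<in>UNIV. \<Sum>a\<in>UNIV. \<Sum>b\<in>UNIV. gi i a * \<Gamma> m b a * gi b j * H i j)"
  have first: "(\<Sum>i\<in>UNIV. \<Sum>j\<in>UNIV. gi i j * (\<Sum>k\<in>UNIV. \<Sum>l\<in>UNIV. gi k l * \<Gamma> j m l * H i k)) = P1"
  proof -
    have "P1 = (\<Sum>i\<in>UNIV. \<Sum>a\<in>UNIV. \<Sum>j\<in>UNIV. \<Sum>b\<in>UNIV. gi i a * \<Gamma> m a b * gi b j * H i j)"
      unfolding P1_def by (rule sum.cong[OF refl], rule sum.swap)
    also have "\<dots> = (\<Sum>i\<in>UNIV. \<Sum>j\<in>UNIV. gi i j * (\<Sum>k\<in>UNIV. \<Sum>l\<in>UNIV. gi k l * \<Gamma> j m l * H i k))"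
      by (simp add: sum_distrib_left \<Gamma>s[of m] gs[of _ j for j] ac_simps)
    finally show ?thesis by simp
  qed
  have second: "(\<Sum>i\<in>UNIV. \<Sum>j\<in>UNIV. gi i j * (\<Sum>k\<in>UNIV. \<Sum>l\<in>UNIV. gi k l * H j l * \<Gamma> i m k)) = P1"
  proof -
    have "(\<Sum>i\<in>UNIV. \<Sum>j\<in>UNIV. gi i j * (\<Sum>k\<in>UNIV. \<Sum>l\<in>UNIV. gi k l * H j l * \<Gamma> i m k))
       = (\<Sum>j\<in>UNIV. \<Sum>i\<in>UNIV. \<Sum>k\<in>UNIV. \<Sum>l\<in>UNIV. gi i j * (gi k l * H j l * \<Gamma> i m k))"
      by (subst sum.swap) (simp add: sum_distrib_left)
    also have "\<dots> = (\<Sum>j\<in>UNIV. \<Sum>i\<in>UNIV. \<Sum>l\<in>UNIV. \<Sum>k\<in>UNIV. gi i j * (gi k l * H j l * \<Gamma> i m k))"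
      by (rule sum.cong[OF refl], rule sum.cong[OF refl], rule sum.swap)
    also have "\<dots> = (\<Sum>j\<in>UNIV. \<Sum>l\<in>UNIV. \<Sum>i\<in>UNIV. \<Sum>k\<in>UNIV. gi i j * (gi k l * H j l * \<Gamma> i m k))"
      by (rule sum.cong[OF refl], rule sum.swap)
    also have "\<dots> = P1"
      unfolding P1_def by (simp add: \<Gamma>s[of _ m] gs ac_simps)
    finally show ?thesis .
  qed
  have "P2 = P1"
  proof -
    have "P2 = (\<Sum>j\<in>UNIV. \<Sum>i\<in>UNIV. \<Sum>a\<in>UNIV. \<Sum>b\<in>UNIV. gi i a * \<Gamma> m b a * gi b j * H i j)"
      unfolding P2_def by (rule sum.swap)
    moreover have "P1 = (\<Sum>i\<in>UNIV. \<Sum>j\<in>UNIV. \<Sum>b\<in>UNIV. \<Sum>a\<in>UNIV. gi i a * \<Gamma> m a b * gi b j * H i j)"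
      unfolding P1_def by (rule sum.cong[OF refl], rule sum.cong[OF refl], rule sum.swap)
    ultimately show ?thesis by (simp add: gs Hs ac_simps)
  qed
  moreover have "(\<Sum>i\<in>UNIV. \<Sum>j\<in>UNIV. (\<Sum>a\<in>UNIV. \<Sum>b\<in>UNIV. gi i a * (\<Gamma> m a b + \<Gamma> m b a) * gi b j) * H i j)
      = P1 + P2"
    unfolding P1_def P2_def by (simp add: sum_distrib_right distrib_left distrib_right sum.distrib)
  ultimately show ?thesis using first second by simp
qed

lemma contraction_cubic_terms:
  fixes gi B :: "'n::finite \<Rightarrow> 'n \<Rightarrow> real" and hh :: "'n \<Rightarrow> 'n \<Rightarrow> 'n \<Rightarrow> real"
  assumes hs: "\<And>i j l. hh i j l = hh i l j"
  shows "(\<Sum>i\<in>UNIV. \<Sum>j\<in>UNIV. gi i j * (\<Sum>k\<in>UNIV. \<Sum>l\<in>UNIV. gi k l * hh j m l * B i k))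
     = (\<Sum>i\<in>UNIV. \<Sum>j\<in>UNIV. \<Sum>k\<in>UNIV. \<Sum>l\<in>UNIV. gi i k * gi j l * B i j * hh k l m)"
proof -
  have "(\<Sum>i\<in>UNIV. \<Sum>j\<in>UNIV. \<Sum>k\<in>UNIV. \<Sum>l\<in>UNIV. gi i k * gi j l * B i j * hh k l m)
    = (\<Sum>i\<in>UNIV. \<Sum>k\<in>UNIV. \<Sum>j\<in>UNIV. \<Sum>l\<in>UNIV. gi i k * gi j l * B i j * hh k l m)"
    by (rule sum.cong[OF refl], rule sum.swap)
  then show ?thesis by (simp add: sum_distrib_left hs[of _ m] ac_simps)
qed

lemma contraction_trace_term:
  fixes gi B :: "'n::finite \<Rightarrow> 'n \<Rightarrow> real" and hh :: "'n \<Rightarrow> 'n \<Rightarrow> 'n \<Rightarrow> real"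
  shows "(\<Sum>k\<in>UNIV. \<Sum>l\<in>UNIV. gi k l * (\<Sum>a\<in>UNIV. \<Sum>b\<in>UNIV. gi a b * hh a b l) * B m k)
     = (\<Sum>i\<in>UNIV. \<Sum>j\<in>UNIV. gi i j * (\<Sum>k\<in>UNIV. \<Sum>l\<in>UNIV. gi k l * hh i j l * B m k))"
proof -
  have "(\<Sum>k\<in>UNIV. \<Sum>l\<in>UNIV. gi k l * (\<Sum>a\<in>UNIV. \<Sum>b\<in>UNIV. gi a b * hh a b l) * B m k)
    = (\<Sum>k\<in>UNIV. \<Sum>l\<in>UNIV. \<Sum>a\<in>UNIV. \<Sum>b\<in>UNIV. gi a b * gi k l * hh a b l * B m k)"
    by (simp add: sum_distrib_left sum_distrib_right ac_simps)
  also have "\<dots> = (\<Sum>k\<in>UNIV. \<Sum>a\<in>UNIV. \<Sum>l\<in>UNIV. \<Sum>b\<in>UNIV. gi a b * gi k l * hh a b l * B m k)"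
    by (rule sum.cong[OF refl], rule sum.swap)
  also have "\<dots> = (\<Sum>k\<in>UNIV. \<Sum>a\<in>UNIV. \<Sum>b\<in>UNIV. \<Sum>l\<in>UNIV. gi a b * gi k l * hh a b l * B m k)"
    by (rule sum.cong[OF refl], rule sum.cong[OF refl], rule sum.swap)
  also have "\<dots> = (\<Sum>a\<in>UNIV. \<Sum>k\<in>UNIV. \<Sum>b\<in>UNIV. \<Sum>l\<in>UNIV. gi a b * gi k l * hh a b l * B m k)"
    by (rule sum.swap)
  also have "\<dots> = (\<Sum>a\<in>UNIV. \<Sum>b\<in>UNIV. \<Sum>k\<in>UNIV. \<Sum>l\<in>UNIV. gi a b * gi k l * hh a b l * B m k)"
    by (rule sum.cong[OF refl], rule sum.swap)
  also have "\<dots> = (\<Sum>i\<in>UNIV. \<Sum>j\<in>UNIV. gi i j * (\<Sum>k\<in>UNIV. \<Sum>l\<in>UNIV. gi k l * hh i j l * B m k))"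
    by (simp add: sum_distrib_left ac_simps)
  finally show ?thesis .
qed

text \<open>The identity between the \<open>J \<partial>\<^sub>m F\<close>-components of the two sides of the main theorem, with
  the geometric quantities abstracted: \<open>gi\<close> the inverse metric, \<open>\<Gamma>\<close> the Christoffel symbols of the
  first kind, \<open>hh\<close> the cubic form, \<open>H\<close> the Hessian of \<open>f\<close>, \<open>B\<^sub>i\<^sub>k = \<langle>J\<nabla>f, \<partial>\<^sub>i\<partial>\<^sub>k F\<rangle>\<close>, \<open>ffz\<close> and
  \<open>ccz\<close> third derivatives of \<open>f\<close> and \<open>F\<close>, \<open>xe\<close> the tangential components of the position vector
  and \<open>fm = \<partial>\<^sub>m f\<close>.\<close>

lemma J_component_identity:
  fixes gi :: "'n::finite \<Rightarrow> 'n \<Rightarrow> real" and \<Gamma> hh :: "'n \<Rightarrow> 'n \<Rightarrow> 'n \<Rightarrow> real"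
    and H B ffz ccz :: "'n \<Rightarrow> 'n \<Rightarrow> real" and xe :: "'n \<Rightarrow> real" and fm :: real and m :: 'n
  assumes gs: "\<And>i j. gi i j = gi j i" and \<Gamma>s: "\<And>i j l. \<Gamma> i j l = \<Gamma> j i l"
    and Hs: "\<And>i j. H i j = H j i" and hs: "\<And>i j l. hh i j l = hh i l j"
  shows
  "(\<Sum>i\<in>UNIV. \<Sum>j\<in>UNIV. gi i j * ((ffz i j - ((\<Sum>k\<in>UNIV. \<Sum>l\<in>UNIV. gi k l * \<Gamma> j m l * H i k)
       + (\<Sum>k\<in>UNIV. \<Sum>l\<in>UNIV. gi k l * hh j m l * B i k)) - ccz i j)
       - (\<Sum>k\<in>UNIV. \<Sum>l\<in>UNIV. gi k l * H j l * \<Gamma> i m k)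
       - (\<Sum>k\<in>UNIV. (\<Sum>l\<in>UNIV. gi k l * \<Gamma> i j l) * H k m)))
   - 1/2 * (\<Sum>k\<in>UNIV. (\<Sum>l\<in>UNIV. gi k l * xe l) * H k m)
   + (\<Sum>i\<in>UNIV. \<Sum>j\<in>UNIV. \<Sum>k\<in>UNIV. \<Sum>l\<in>UNIV. gi i k * gi j l * B i j * hh k l m)
   + 1/2 * fm
  = (\<Sum>i\<in>UNIV. \<Sum>j\<in>UNIV. (- (\<Sum>a\<in>UNIV. \<Sum>b\<in>UNIV. gi i a * (\<Gamma> m a b + \<Gamma> m b a) * gi b j)) * H i j
       + gi i j * (ffz i j - ((\<Sum>k\<in>UNIV. \<Sum>l\<in>UNIV. gi k l * \<Gamma> i j l * H m k)
            + (\<Sum>k\<in>UNIV. \<Sum>l\<in>UNIV. gi k l * hh i j l * B m k)) - ccz i j))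
   - 1/2 * (fm + (\<Sum>k\<in>UNIV. \<Sum>l\<in>UNIV. gi k l * xe l * H m k)
       + (\<Sum>k\<in>UNIV. \<Sum>l\<in>UNIV. gi k l * (-2 * (\<Sum>a\<in>UNIV. \<Sum>b\<in>UNIV. gi a b * hh a b l)) * B m k))
   + fm" (is "?L = ?R")
proof -
  define A1 where "A1 = (\<Sum>i\<in>UNIV. \<Sum>j\<in>UNIV. gi i j * ffz i j)"
  define A2 where "A2 = (\<Sum>i\<in>UNIV. \<Sum>j\<in>UNIV. gi i j * ccz i j)"
  define C1 where "C1 = (\<Sum>i\<in>UNIV. \<Sum>j\<in>UNIV. gi i j * (\<Sum>k\<in>UNIV. \<Sum>l\<in>UNIV. gi k l * \<Gamma> j m l * H i k))"
  define C2 where "C2 = (\<Sum>i\<in>UNIV. \<Sum>j\<in>UNIV. gi i j * (\<Sum>k\<in>UNIV. \<Sum>l\<in>UNIV. gi k l * H j l * \<Gamma> i m k))"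
  define C3 where "C3 = (\<Sum>i\<in>UNIV. \<Sum>j\<in>UNIV. (\<Sum>a\<in>UNIV. \<Sum>b\<in>UNIV. gi i a * (\<Gamma> m a b + \<Gamma> m b a) * gi b j) * H i j)"
  define X2 where "X2 = (\<Sum>i\<in>UNIV. \<Sum>j\<in>UNIV. gi i j * (\<Sum>k\<in>UNIV. \<Sum>l\<in>UNIV. gi k l * hh j m l * B i k))"
  define X4 where "X4 = (\<Sum>i\<in>UNIV. \<Sum>j\<in>UNIV. gi i j * (\<Sum>k\<in>UNIV. \<Sum>l\<in>UNIV. gi k l * \<Gamma> i j l * H m k))"
  define X5 where "X5 = (\<Sum>k\<in>UNIV. \<Sum>l\<in>UNIV. gi k l * xe l * H m k)"
  define Y3 where "Y3 = (\<Sum>i\<in>UNIV. \<Sum>j\<in>UNIV. gi i j * (\<Sum>k\<in>UNIV. \<Sum>l\<in>UNIV. gi k l * hh i j l * B m k))"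
  have "?L = A1 - C1 - X2 - A2 - C2
      - (\<Sum>i\<in>UNIV. \<Sum>j\<in>UNIV. gi i j * (\<Sum>k\<in>UNIV. (\<Sum>l\<in>UNIV. gi k l * \<Gamma> i j l) * H k m))
      - 1/2 * (\<Sum>k\<in>UNIV. (\<Sum>l\<in>UNIV. gi k l * xe l) * H k m)
      + (\<Sum>i\<in>UNIV. \<Sum>j\<in>UNIV. \<Sum>k\<in>UNIV. \<Sum>l\<in>UNIV. gi i k * gi j l * B i j * hh k l m) + 1/2 * fm"
    unfolding A1_def A2_def C1_def C2_def X2_def
    by (simp add: sum.distrib sum_subtractf right_diff_distrib distrib_left)
  also have "\<dots> = A1 - C1 - X2 - A2 - C2 - X4 - 1/2 * X5 + X2 + 1/2 * fm"
    unfolding X2_def X4_def X5_def contraction_cubic_terms[of hh, OF hs]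
    by (simp add: sum_distrib_right Hs[of _ m])
  finally have L: "?L = A1 - (C1 + C2) - A2 - X4 - 1/2 * X5 + 1/2 * fm" by simp
  have trace: "(\<Sum>k\<in>UNIV. \<Sum>l\<in>UNIV. gi k l * (-2 * (\<Sum>a\<in>UNIV. \<Sum>b\<in>UNIV. gi a b * hh a b l)) * B m k)
      = -2 * Y3"
    unfolding Y3_def contraction_trace_term[symmetric]
    by (simp add: sum_distrib_left sum_distrib_right ac_simps)
  have "?R = - C3 + A1 - X4 - Y3 - A2 - 1/2 * (fm + X5
      + (\<Sum>k\<in>UNIV. \<Sum>l\<in>UNIV. gi k l * (-2 * (\<Sum>a\<in>UNIV. \<Sum>b\<in>UNIV. gi a b * hh a b l)) * B m k)) + fm"
    unfolding A1_def A2_def X4_def Y3_def X5_def C3_def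
    by (simp add: sum.distrib sum_subtractf right_diff_distrib distrib_left sum_negf)
  also have "\<dots> = - C3 + A1 - X4 - A2 - 1/2 * (fm + X5) + fm"
    unfolding trace by (simp add: algebra_simps)
  finally have R: "?R = - C3 + A1 - X4 - A2 - 1/2 * (fm + X5) + fm" .
  have "C1 + C2 = C3"
    unfolding C1_def C2_def C3_def by (rule contraction_christoffel_terms[OF gs \<Gamma>s Hs])
  then show ?thesis unfolding L R by (simp add: field_simps)
qed

definition hessian :: "(real^'n::finite \<Rightarrow> complex^'n) \<Rightarrow> (real^'n \<Rightarrow> real) \<Rightarrow> real^'n \<Rightarrow> 'n \<Rightarrow> 'n \<Rightarrow> real"
  where "hessian F \<phi> v i j = pd i (pd j \<phi>) v - inner (grad F \<phi> v) (pd i (pd j F) v)"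

context immersed_chart
begin

lemma J_dF_differentiable: "v \<in> U \<Longrightarrow> (\<lambda>w. Jc (pd l F w)) differentiable (at v)"
  by (intro differentiable_Jc dF_differentiable)

lemma christoffel_sym: "v \<in> U \<Longrightarrow> inner (pd i (pd j F) v) X = inner (pd j (pd i F) v) X"
  using smooth_pd_commute[OF open_U smooth_F, of v i j] by simp

lemma laplace_trace_hessian:
  assumes v: "v \<in> U"
  shows "laplace F \<phi> v = (\<Sum>i\<in>UNIV. \<Sum>j\<in>UNIV. ginv F v i j * hessian F \<phi> v i j)"
proof -
  have "(\<Sum>k\<in>UNIV. christoffel F v k i j * pd k \<phi> v) = inner (grad F \<phi> v) (pd i (pd j F) v)" for i j
  proof -
    have "(\<Sum>k\<in>UNIV. christoffel F v k i j * pd k \<phi> v)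
        = (\<Sum>k\<in>UNIV. \<Sum>l\<in>UNIV. ginv F v k l * inner (pd i (pd j F) v) (pd l F v) * pd k \<phi> v)"
      by (simp add: christoffel_def sum_distrib_right)
    also have "\<dots> = (\<Sum>l\<in>UNIV. \<Sum>k\<in>UNIV. ginv F v k l * inner (pd i (pd j F) v) (pd l F v) * pd k \<phi> v)"
      by (rule sum.swap)
    also have "\<dots> = inner (grad F \<phi> v) (pd i (pd j F) v)"
      unfolding grad_def inner_sum_left
      by (intro sum.cong refl) (simp add: ginv_sym[OF v] inner_commute ac_simps)
    finally show ?thesis .
  qed
  then show ?thesis unfolding laplace_def hessian_def by simp
qed

lemma inner_sff_normal:
  assumes "\<And>l. inner X (pd l F v) = 0"
  shows "inner (sff F v i j) X = inner (pd i (pd j F) v) X"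
proof -
  have "inner (pd l F v) X = 0" for l
    using assms by (simp add: inner_commute)
  then have "inner (tproj F v (pd i (pd j F) v)) X = 0"
    unfolding tproj_def by (simp add: inner_sum_left)
  then show ?thesis unfolding sff_def nproj_def by (simp add: inner_diff_left)
qed

end

section \<open>Covariant derivatives of \<open>J \<nabla>f\<close>\<close>

locale lagrangian_function = lagrangian_chart U F
  for U :: "(real^'n::finite) set" and F :: "real^'n \<Rightarrow> complex^'n" +
  fixes f :: "real^'n \<Rightarrow> real"
  assumes smooth_f: "smooth_on U f"
begin

lemma f_differentiable: "v \<in> U \<Longrightarrow> f differentiable (at v)"
  using smooth_on_differentiable[OF smooth_f] .

lemma df_differentiable: "v \<in> U \<Longrightarrow> pd i f differentiable (at v)"
  using smooth_on_pd_differentiable[OF smooth_f] .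

lemma ddf_differentiable: "v \<in> U \<Longrightarrow> pd i (pd j f) differentiable (at v)"
  using smooth_on_pd2_differentiable[OF smooth_f] .

lemma grad_differentiable: "v \<in> U \<Longrightarrow> grad F f differentiable (at v)"
  unfolding grad_def
  by (intro differentiable_sum ballI finite differentiable_scaleR differentiable_mult
      ginv_differentiable df_differentiable dF_differentiable)

lemma Jgrad_differentiable: "v \<in> U \<Longrightarrow> (\<lambda>w. Jc (grad F f w)) differentiable (at v)"
  by (intro differentiable_Jc grad_differentiable)

lemma hessian_differentiable: "v \<in> U \<Longrightarrow> (\<lambda>w. hessian F f w j m) differentiable (at v)"
  unfolding hessian_def
  by (intro differentiable_diff differentiable_inner ddf_differentiable ddF_differentiable
      grad_differentiable)

lemma hessian_sym: "v \<in> U \<Longrightarrow> hessian F f v i j = hessian F f v j i"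
  unfolding hessian_def
  using smooth_pd_commute[OF open_U smooth_f, of v i j] smooth_pd_commute[OF open_U smooth_F, of v i j]
  by simp

text \<open>First derivatives of \<open>\<nabla>f\<close> and \<open>J\<nabla>f\<close>, obtained by differentiating the identities
  \<open>\<langle>\<nabla>f, \<partial>\<^sub>l F\<rangle> = \<partial>\<^sub>l f\<close>, \<open>\<langle>\<nabla>f, J\<partial>\<^sub>l F\<rangle> = 0\<close> and \<open>\<langle>J\<nabla>f, J\<partial>\<^sub>l F\<rangle> = \<partial>\<^sub>l f\<close>.\<close>

lemma pd_Jgrad_J_dF:
  assumes v: "v \<in> U"
  shows "inner (pd i (\<lambda>w. Jc (grad F f w)) v) (Jc (pd m F v)) = hessian F f v i m"
proof -
  have "pd i (\<lambda>w. inner (Jc (grad F f w)) (Jc (pd m F w))) v = pd i (pd m f) v"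
    using pd_cong_open[OF open_U v, of "\<lambda>w. inner (Jc (grad F f w)) (Jc (pd m F w))" "pd m f"]
      inner_Jgrad_J_dF by simp
  moreover have "pd i (\<lambda>w. inner (Jc (grad F f w)) (Jc (pd m F w))) v
     = inner (pd i (\<lambda>w. Jc (grad F f w)) v) (Jc (pd m F v)) + inner (grad F f v) (pd i (pd m F) v)"
    using pd_inner[OF Jgrad_differentiable[OF v] J_dF_differentiable[OF v]]
      pd_Jc[OF dF_differentiable[OF v]] by (simp add: inner_Jc_Jc)
  ultimately show ?thesis unfolding hessian_def by simp
qed

lemma pd_grad_dF:
  assumes v: "v \<in> U"
  shows "inner (pd i (grad F f) v) (pd l F v) = hessian F f v i l"
proof -
  have "pd i (\<lambda>w. inner (grad F f w) (pd l F w)) v = pd i (pd l f) v"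
    using pd_cong_open[OF open_U v, of "\<lambda>w. inner (grad F f w) (pd l F w)" "pd l f"]
      inner_grad_dF by simp
  moreover have "pd i (\<lambda>w. inner (grad F f w) (pd l F w)) v
     = inner (pd i (grad F f) v) (pd l F v) + inner (grad F f v) (pd i (pd l F) v)"
    using pd_inner[OF grad_differentiable[OF v] dF_differentiable[OF v]] by simp
  ultimately show ?thesis unfolding hessian_def by simp
qed

lemma pd_grad_J_dF:
  assumes v: "v \<in> U"
  shows "inner (pd i (grad F f) v) (Jc (pd l F v)) = inner (Jc (grad F f v)) (pd i (pd l F) v)"
proof -
  have "pd i (\<lambda>w. inner (grad F f w) (Jc (pd l F w))) v = pd i (\<lambda>w. 0) v"
    using pd_cong_open[OF open_U v, of "\<lambda>w. inner (grad F f w) (Jc (pd l F w))" "\<lambda>w. 0"]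
      inner_grad_J_dF by simp
  moreover have "pd i (\<lambda>w. inner (grad F f w) (Jc (pd l F w))) v
     = inner (pd i (grad F f) v) (Jc (pd l F v)) + inner (grad F f v) (Jc (pd i (pd l F) v))"
    using pd_inner[OF grad_differentiable[OF v] J_dF_differentiable[OF v]]
      pd_Jc[OF dF_differentiable[OF v]] by simp
  ultimately show ?thesis by (simp add: pd_const inner_Jc_left)
qed

lemma inner_pd_grad:
  assumes v: "v \<in> U"
  shows "inner (pd i (grad F f) v) Y =
    (\<Sum>k\<in>UNIV. \<Sum>l\<in>UNIV. ginv F v k l * inner Y (pd l F v) * hessian F f v i k) +
    (\<Sum>k\<in>UNIV. \<Sum>l\<in>UNIV. ginv F v k l * inner Y (Jc (pd l F v)) * inner (Jc (grad F f v)) (pd i (pd k F) v))"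
proof -
  have "inner (pd i (grad F f) v) Y = inner (pd i (grad F f) v) (tproj F v Y + nproj_frame F v Y)"
    using tangent_normal_decomposition[OF v, of Y] by simp
  also have "\<dots> = (\<Sum>k\<in>UNIV. \<Sum>l\<in>UNIV. ginv F v k l * inner Y (pd l F v) * inner (pd i (grad F f) v) (pd k F v)) +
    (\<Sum>k\<in>UNIV. \<Sum>l\<in>UNIV. ginv F v k l * inner Y (Jc (pd l F v)) * inner (pd i (grad F f) v) (Jc (pd k F v)))"
    unfolding tproj_def nproj_frame_def by (simp add: inner_add_right inner_sum_right)
  finally show ?thesis using pd_grad_dF[OF v] pd_grad_J_dF[OF v] by simp
qed

lemma pd_hessian:
  assumes v: "v \<in> U"
  shows "pd i (\<lambda>w. hessian F f w j m) v = pd i (pd j (pd m f)) v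
     - inner (pd i (grad F f) v) (pd j (pd m F) v) - inner (grad F f v) (pd i (pd j (pd m F)) v)"
  unfolding hessian_def
  using pd_diff[OF ddf_differentiable[OF v]
      differentiable_inner[OF grad_differentiable[OF v] ddF_differentiable[OF v]]]
    pd_inner[OF grad_differentiable[OF v] ddF_differentiable[OF v]] by simp

lemma nabn_Jgrad_expansion:
  assumes v: "v \<in> U"
  shows "nabn F j (\<lambda>w. Jc (grad F f w)) v
    = (\<Sum>k\<in>UNIV. \<Sum>l\<in>UNIV. (ginv F v k l * hessian F f v j l) *\<^sub>R Jc (pd k F v))"
  unfolding nabn_def nproj_eq_frame[OF v] nproj_frame_def using pd_Jgrad_J_dF[OF v] by simp

lemma nabn_Jgrad_differentiable:
  assumes v: "v \<in> U"
  shows "nabn F j (\<lambda>w. Jc (grad F f w)) differentiable (at v)"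
proof -
  have "(\<lambda>w. \<Sum>k\<in>UNIV. \<Sum>l\<in>UNIV. (ginv F w k l * hessian F f w j l) *\<^sub>R Jc (pd k F w))
      differentiable (at v)"
    by (intro differentiable_sum ballI finite differentiable_scaleR differentiable_mult
        ginv_differentiable hessian_differentiable J_dF_differentiable v)
  then show ?thesis
    using differentiable_cong_open[OF open_U v, of _ "nabn F j (\<lambda>w. Jc (grad F f w))"]
      nabn_Jgrad_expansion by simp
qed

lemma inner_nabn_Jgrad_J_dF:
  "v \<in> U \<Longrightarrow> inner (nabn F j (\<lambda>w. Jc (grad F f w)) v) (Jc (pd m F v)) = hessian F f v j m"
  unfolding nabn_def using inner_nproj_J_dF pd_Jgrad_J_dF by simp

lemma inner_nabn2_Jgrad_J_dF:
  assumes v: "v \<in> U"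
  shows "inner (nabn F i (nabn F j (\<lambda>w. Jc (grad F f w))) v) (Jc (pd m F v)) =
     pd i (\<lambda>w. hessian F f w j m) v
     - (\<Sum>k\<in>UNIV. \<Sum>l\<in>UNIV. ginv F v k l * hessian F f v j l * inner (pd k F v) (pd i (pd m F) v))"
proof -
  let ?W = "nabn F j (\<lambda>w. Jc (grad F f w))"
  have "pd i (\<lambda>w. inner (?W w) (Jc (pd m F w))) v = pd i (\<lambda>w. hessian F f w j m) v"
    using pd_cong_open[OF open_U v, of "\<lambda>w. inner (?W w) (Jc (pd m F w))" "\<lambda>w. hessian F f w j m"]
      inner_nabn_Jgrad_J_dF by simp
  moreover have "pd i (\<lambda>w. inner (?W w) (Jc (pd m F w))) v =
      inner (pd i ?W v) (Jc (pd m F v)) + inner (?W v) (Jc (pd i (pd m F) v))"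
    using pd_inner[OF nabn_Jgrad_differentiable[OF v] J_dF_differentiable[OF v]]
      pd_Jc[OF dF_differentiable[OF v]] by simp
  moreover have "inner (?W v) (Jc (pd i (pd m F) v)) =
      (\<Sum>k\<in>UNIV. \<Sum>l\<in>UNIV. ginv F v k l * hessian F f v j l * inner (pd k F v) (pd i (pd m F) v))"
    unfolding nabn_Jgrad_expansion[OF v] by (simp add: inner_sum_left inner_Jc_Jc)
  moreover have "inner (nabn F i ?W v) (Jc (pd m F v)) = inner (pd i ?W v) (Jc (pd m F v))"
    unfolding nabn_def[of F i ?W] using inner_nproj_J_dF[OF v] by simp
  ultimately show ?thesis by simp
qed

lemma Lop_Jgrad_J_component_expanded:
  assumes u: "u \<in> U"
  shows "inner (Lop F (\<lambda>v. Jc (grad F f v)) u) (Jc (pd m F u)) =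
  (\<Sum>i\<in>UNIV. \<Sum>j\<in>UNIV. ginv F u i j * ((pd i (pd j (pd m f)) u
       - ((\<Sum>k\<in>UNIV. \<Sum>l\<in>UNIV. ginv F u k l * inner (pd j (pd m F) u) (pd l F u) * hessian F f u i k)
       + (\<Sum>k\<in>UNIV. \<Sum>l\<in>UNIV. ginv F u k l * inner (pd j (pd m F) u) (Jc (pd l F u))
            * inner (Jc (grad F f u)) (pd i (pd k F) u)))
       - inner (grad F f u) (pd i (pd j (pd m F)) u))
       - (\<Sum>k\<in>UNIV. \<Sum>l\<in>UNIV. ginv F u k l * hessian F f u j l * inner (pd i (pd m F) u) (pd k F u))
       - (\<Sum>k\<in>UNIV. (\<Sum>l\<in>UNIV. ginv F u k l * inner (pd i (pd j F) u) (pd l F u)) * hessian F f u k m)))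
   - 1/2 * (\<Sum>k\<in>UNIV. (\<Sum>l\<in>UNIV. ginv F u k l * inner (F u) (pd l F u)) * hessian F f u k m)
   + (\<Sum>i\<in>UNIV. \<Sum>j\<in>UNIV. \<Sum>k\<in>UNIV. \<Sum>l\<in>UNIV. ginv F u i k * ginv F u j l
       * inner (Jc (grad F f u)) (pd i (pd j F) u) * inner (pd k (pd l F) u) (Jc (pd m F u)))
   + 1/2 * pd m f u"
proof -
  have nlaplace: "inner (nlaplace F (\<lambda>v. Jc (grad F f v)) u) (Jc (pd m F u)) =
     (\<Sum>i\<in>UNIV. \<Sum>j\<in>UNIV. ginv F u i j * (inner (nabn F i (nabn F j (\<lambda>w. Jc (grad F f w))) u) (Jc (pd m F u))
       - (\<Sum>k\<in>UNIV. christoffel F u k i j * hessian F f u k m)))"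
    unfolding nlaplace_def by (simp add: inner_sum_left inner_diff_left inner_nabn_Jgrad_J_dF[OF u])
  have christoffel: "(\<Sum>k\<in>UNIV. christoffel F u k i j * hessian F f u k m)
      = (\<Sum>k\<in>UNIV. (\<Sum>l\<in>UNIV. ginv F u k l * inner (pd i (pd j F) u) (pd l F u)) * hessian F f u k m)"
    for i j
    by (simp add: christoffel_def)
  have sff_J: "inner (sff F u k l) (Jc (pd m F u)) = inner (pd k (pd l F) u) (Jc (pd m F u))" for k l
    unfolding sff_def using inner_nproj_J_dF[OF u] by simp
  have sff_Jgrad: "inner (sff F u i j) (Jc (grad F f u)) = inner (Jc (grad F f u)) (pd i (pd j F) u)"
    for i j
    using inner_sff_normal[of "Jc (grad F f u)" u i j] inner_Jgrad_dF[OF u]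
    by (simp add: inner_commute)
  have "inner (Lop F (\<lambda>v. Jc (grad F f v)) u) (Jc (pd m F u)) =
     inner (nlaplace F (\<lambda>v. Jc (grad F f v)) u) (Jc (pd m F u))
   - 1/2 * (\<Sum>k\<in>UNIV. (\<Sum>l\<in>UNIV. ginv F u k l * inner (F u) (pd l F u)) * hessian F f u k m)
   + (\<Sum>i\<in>UNIV. \<Sum>j\<in>UNIV. \<Sum>k\<in>UNIV. \<Sum>l\<in>UNIV. ginv F u i k * ginv F u j l
       * inner (Jc (grad F f u)) (pd i (pd j F) u) * inner (pd k (pd l F) u) (Jc (pd m F u)))
   + 1/2 * pd m f u"
    unfolding Lop_def
    by (simp add: inner_add_left inner_diff_left inner_sum_left inner_nabn_Jgrad_J_dF[OF u]
        sff_Jgrad sff_J inner_Jgrad_J_dF[OF u] xT_coord_def)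
  then show ?thesis
    unfolding nlaplace christoffel inner_nabn2_Jgrad_J_dF[OF u] pd_hessian[OF u] inner_pd_grad[OF u]
    by (simp add: inner_commute)
qed

text \<open>The \<open>J\<partial>\<^sub>m F\<close>-component of \<open>J\<nabla>(\<L>f + f)\<close>, i.e. \<open>\<partial>\<^sub>m(\<L>f + f)\<close>, in the same terms; this is
  where the self-shrinker equation enters.\<close>

lemma pd_drift_expanded:
  assumes ss: "self_shrinker_on U F" and u: "u \<in> U"
  shows "pd m (\<lambda>v. driftL F f v + f v) u =
   (\<Sum>i\<in>UNIV. \<Sum>j\<in>UNIV. (- (\<Sum>a\<in>UNIV. \<Sum>b\<in>UNIV. ginv F u i a * (inner (pd m (pd a F) u) (pd b F u)
        + inner (pd m (pd b F) u) (pd a F u)) * ginv F u b j)) * hessian F f u i j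
     + ginv F u i j * (pd i (pd j (pd m f)) u
        - ((\<Sum>k\<in>UNIV. \<Sum>l\<in>UNIV. ginv F u k l * inner (pd i (pd j F) u) (pd l F u) * hessian F f u m k)
          + (\<Sum>k\<in>UNIV. \<Sum>l\<in>UNIV. ginv F u k l * inner (pd i (pd j F) u) (Jc (pd l F u))
              * inner (Jc (grad F f u)) (pd m (pd k F) u)))
        - inner (grad F f u) (pd i (pd j (pd m F)) u)))
   - 1/2 * (pd m f u + (\<Sum>k\<in>UNIV. \<Sum>l\<in>UNIV. ginv F u k l * inner (F u) (pd l F u) * hessian F f u m k)
       + (\<Sum>k\<in>UNIV. \<Sum>l\<in>UNIV. ginv F u k l
           * (-2 * (\<Sum>a\<in>UNIV. \<Sum>b\<in>UNIV. ginv F u a b * inner (pd a (pd b F) u) (Jc (pd l F u))))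
           * inner (Jc (grad F f u)) (pd m (pd k F) u)))
   + pd m f u"
proof -
  define trace_hessian where "trace_hessian w = (\<Sum>i\<in>UNIV. \<Sum>j\<in>UNIV. ginv F w i j * hessian F f w i j)"
    for w
  define position_grad where "position_grad w = inner (F w) (grad F f w)" for w
  have d_trace: "trace_hessian differentiable (at u)" unfolding trace_hessian_def
    by (intro differentiable_sum ballI finite differentiable_mult ginv_differentiable
        hessian_differentiable u)
  have d_position: "position_grad differentiable (at u)" unfolding position_grad_def
    by (intro differentiable_inner F_differentiable grad_differentiable u)
  have d_half: "(\<lambda>w. 1/2 * position_grad w) differentiable (at u)" using d_position by simp
  have "pd m (\<lambda>v. driftL F f v + f v) u
      = pd m (\<lambda>w. trace_hessian w - 1/2 * position_grad w + f w) u"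
    using pd_cong_open[OF open_U u, of "\<lambda>v. driftL F f v + f v"
        "\<lambda>w. trace_hessian w - 1/2 * position_grad w + f w"]
      laplace_trace_hessian unfolding driftL_def trace_hessian_def position_grad_def by simp
  also have "\<dots> = pd m trace_hessian u - 1/2 * pd m position_grad u + pd m f u"
    using pd_add[OF differentiable_diff[OF d_trace d_half] f_differentiable[OF u]]
      pd_diff[OF d_trace d_half] pd_mult[OF differentiable_const d_position, of m "1/2"]
    by (simp add: pd_const)
  also have "pd m trace_hessian u = (\<Sum>i\<in>UNIV. \<Sum>j\<in>UNIV. pd m (\<lambda>w. ginv F w i j) u * hessian F f u i j
      + ginv F u i j * pd m (\<lambda>w. hessian F f w i j) u)"
    unfolding trace_hessian_def
    by (simp add: pd_sum pd_mult ginv_differentiable[OF u] hessian_differentiable[OF u])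
  also have "pd m position_grad u = pd m f u + inner (pd m (grad F f) u) (F u)"
    unfolding position_grad_def
    using pd_inner[OF F_differentiable[OF u] grad_differentiable[OF u]] inner_grad_dF[OF u]
    by (simp add: inner_commute)
  finally show ?thesis
    unfolding pd_ginv[OF u] pd_hessian[OF u] inner_pd_grad[OF u] self_shrinker_J_component[OF ss u]
      smooth_pd_commute3[OF open_U smooth_f u, symmetric] smooth_pd_commute3[OF open_U smooth_F u, symmetric]
    by (simp add: inner_commute)
qed

lemma Lop_Jgrad_J_component:
  assumes "self_shrinker_on U F" and u: "u \<in> U"
  shows "inner (Lop F (\<lambda>v. Jc (grad F f v)) u) (Jc (pd m F u)) = pd m (\<lambda>v. driftL F f v + f v) u"
  unfolding Lop_Jgrad_J_component_expanded[OF u] pd_drift_expanded[OF assms]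
  by (rule J_component_identity[where gi="ginv F u" and \<Gamma>="\<lambda>i j l. inner (pd i (pd j F) u) (pd l F u)"
        and hh="\<lambda>i j l. inner (pd i (pd j F) u) (Jc (pd l F u))" and H="hessian F f u"
        and B="\<lambda>i k. inner (Jc (grad F f u)) (pd i (pd k F) u)" and ffz="\<lambda>i j. pd i (pd j (pd m f)) u"
        and ccz="\<lambda>i j. inner (grad F f u) (pd i (pd j (pd m F)) u)" and xe="\<lambda>l. inner (F u) (pd l F u)"
        and fm="pd m f u" and m=m,
      OF ginv_sym[OF u] christoffel_sym[OF u] hessian_sym[OF u] cubic_form_sym[OF u]])

end

theorem theorem5p1:
  fixes U :: "(real^'n::finite) set"
    and F :: "real^'n \<Rightarrow> complex^'n"
    and f :: "real^'n \<Rightarrow> real"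
  assumes "open U"
    and "smooth_on U F"
    and "immersion_on U F"
    and "lagrangian_on U F"
    and "self_shrinker_on U F"
    and "smooth_on U f"
    and "u \<in> U"
  shows "Lop F (\<lambda>v. Jc (grad F f v)) u = Jc (grad F (\<lambda>v. driftL F f v + f v) u)"
proof -
  interpret lagrangian_function U F f
    using assms by unfold_locales auto
  let ?D = "Lop F (\<lambda>v. Jc (grad F f v)) u - Jc (grad F (\<lambda>v. driftL F f v + f v) u)"
  have "inner ?D (pd p F u) = 0" for p
    using Lop_normal[OF \<open>u \<in> U\<close>] inner_Jgrad_dF[OF \<open>u \<in> U\<close>] by (simp add: inner_diff_left)
  moreover have "inner ?D (Jc (pd p F u)) = 0" for p
    using Lop_Jgrad_J_component[OF \<open>self_shrinker_on U F\<close> \<open>u \<in> U\<close>] inner_Jgrad_J_dF[OF \<open>u \<in> U\<close>]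
    by (simp add: inner_diff_left)
  ultimately have "?D = 0" using orthogonal_to_frame_eq_0[OF \<open>u \<in> U\<close>] by blast
  then show ?thesis by simp
qed

end
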